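(* Let $\mathcal U$ be a free ultrafilter on $\mathbb N$, $\mathcal Q=\prod_{n\to\mathcal U}M_n(\mathbb C)$, $d\in\mathbb N$ and $\mu\in\mathbb S_d(\mathrm T_{\mathrm{tr}})$. If $\chi^{\mathcal U}_{\mathrm{full}}(\mu)>-\infty$, then there exists $\mathbf X\in\mathcal Q^d$ with $\mathrm{tp}^{\mathcal Q}(\mathbf X)=\mu$.
   Context: A tracial $\mathrm W^*$-algebra $\mathcal M=(M,\tau)$ is a von Neumann algebra with a faithful normal tracial state; $\|x\|_2=\tau(x^*x)^{1/2}$. Tracial $\mathrm W^*$-algebras are metric structures in the continuous-logic language $\mathcal L_{\mathrm{tr}}$ of Farah–Hart–Sherman (one sort, metric $\|x-y\|_2$, domains of quantification operator-norm balls $D_r=\{x:\|x\|\le r\}$, atomic formulas real/imaginary parts of traces of $*$-polynomials, formulas built with continuous connectives and $\sup/\inf$ over $D_r$); $\mathrm T_{\mathrm{tr}}$ is the theory of tracial $\mathrm W^*$-algebras. For $\mathbf X\in M^d$, $\mathrm{tp}^{\mathcal M}(\mathbf X)$ is the map $\phi\mapsto\phi^{\mathcal M}(\mathbf X)$ on formulas in $d$ free variables. $\mathbb S_d(\mathrm T_{\mathrm{tr}})$ is the set of types of $d$-tuples in tracial $\mathrm W^*$-algebras, $\mathbb S_{d,r}(\mathrm T_{\mathrm{tr}})$ the subset for tuples in $D_r^d$, with the weak-$*$ (logic) topology (compact metrizable); $\mathcal O\subseteq\mathbb S_d$ is open iff $\mathcal O\cap\mathbb S_{d,r}$ is open for every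 $r$. $\mathcal Q$ is the tracial ultraproduct of matrix algebras with normalized traces. $\mathrm{vol}$ is Lebesgue measure on $M_n(\mathbb C)^d$ transported from $\mathbb C^{dn^2}$ via an isometry for $\langle\mathbf X,\mathbf Y\rangle=\sum_j\mathrm{tr}_n(X_j^*Y_j)$. For $\mathcal K\subseteq\mathbb S_d(\mathrm T_{\mathrm{tr}})$: $\Gamma_r^{(n)}(\mathcal K)=\{\mathbf Y\in(D_r^{M_n(\mathbb C)})^d:\mathrm{tp}^{M_n(\mathbb C)}(\mathbf Y)\in\mathcal K\}$, $\chi^{\mathcal U}_{\mathrm{full},r}(\mathcal K)=\inf_{\mathcal O\supseteq\mathcal K\text{ open}}\lim_{n\to\mathcal U}\big(n^{-2}\log\mathrm{vol}\,\Gamma_r^{(n)}(\mathcal O)+2d\log n\big)$, $\chi^{\mathcal U}_{\mathrm{full}}(\mathcal K)=\sup_{r>0}\chi^{\mathcal U}_{\mathrm{full},r}(\mathcal K)$, and $\chi(\mu)=\chi(\{\mu\})$. *)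

theory Defs
  imports "HOL-Analysis.Analysis"
begin

definition free_ultrafilter :: "nat filter \<Rightarrow> bool" where
  "free_ultrafilter U \<longleftrightarrow> U \<noteq> bot
     \<and> (\<forall>P. eventually P U \<or> eventually (\<lambda>x. \<not> P x) U)
     \<and> (\<forall>n. \<not> eventually (\<lambda>k. k = n) U)"

record 'a tralg =
  t_car :: "'a set"
  t_zero :: 'a
  t_one :: 'a
  t_add :: "'a \<Rightarrow> 'a \<Rightarrow> 'a"
  t_mul :: "'a \<Rightarrow> 'a \<Rightarrow> 'a"
  t_scl :: "complex \<Rightarrow> 'a \<Rightarrow> 'a"
  t_star :: "'a \<Rightarrow> 'a"
  t_norm :: "'a \<Rightarrow> real"   \<comment> \<open>operator (C*-) norm\<close>
  t_tr :: "'a \<Rightarrow> complex"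

definition t_diff :: "'a tralg \<Rightarrow> 'a \<Rightarrow> 'a \<Rightarrow> 'a" where
  "t_diff A x y = t_add A x (t_scl A (-1) y)"

definition norm2 :: "'a tralg \<Rightarrow> 'a \<Rightarrow> real" where
  "norm2 A x = sqrt (Re (t_tr A (t_mul A (t_star A x) x)))"

text \<open>Tracial W*-algebra: a unital C*-algebra with a faithful tracial state whose
  operator-norm unit ball is complete for the 2-norm (the standard abstract
  characterisation of tracial von Neumann algebras, i.e. the models of T_tr).\<close>

definition tracial_W :: "'a tralg \<Rightarrow> bool" where
  "tracial_W A \<longleftrightarrow>
    t_zero A \<in> t_car A \<and> t_one A \<in> t_car A
  \<and> (\<forall>x\<in>t_car A. \<forall>y\<in>t_car A. t_add A x y \<in> t_car A \<and> t_mul A x y \<in> t_car A)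
  \<and> (\<forall>c. \<forall>x\<in>t_car A. t_scl A c x \<in> t_car A)
  \<and> (\<forall>x\<in>t_car A. t_star A x \<in> t_car A)
  \<comment> \<open>complex vector space\<close>
  \<and> (\<forall>x\<in>t_car A. \<forall>y\<in>t_car A. \<forall>z\<in>t_car A. t_add A (t_add A x y) z = t_add A x (t_add A y z))
  \<and> (\<forall>x\<in>t_car A. \<forall>y\<in>t_car A. t_add A x y = t_add A y x)
  \<and> (\<forall>x\<in>t_car A. t_add A x (t_zero A) = x)
  \<and> (\<forall>x\<in>t_car A. t_add A x (t_scl A (-1) x) = t_zero A)
  \<and> (\<forall>x\<in>t_car A. t_scl A 1 x = x)
  \<and> (\<forall>a b. \<forall>x\<in>t_car A. t_scl A a (t_scl A b x) = t_scl A (a * b) x)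
  \<and> (\<forall>a b. \<forall>x\<in>t_car A. t_scl A (a + b) x = t_add A (t_scl A a x) (t_scl A b x))
  \<and> (\<forall>a. \<forall>x\<in>t_car A. \<forall>y\<in>t_car A. t_scl A a (t_add A x y) = t_add A (t_scl A a x) (t_scl A a y))
  \<comment> \<open>unital algebra\<close>
  \<and> (\<forall>x\<in>t_car A. \<forall>y\<in>t_car A. \<forall>z\<in>t_car A. t_mul A (t_mul A x y) z = t_mul A x (t_mul A y z))
  \<and> (\<forall>x\<in>t_car A. t_mul A (t_one A) x = x \<and> t_mul A x (t_one A) = x)
  \<and> (\<forall>x\<in>t_car A. \<forall>y\<in>t_car A. \<forall>z\<in>t_car A.
        t_mul A x (t_add A y z) = t_add A (t_mul A x y) (t_mul A x z)
      \<and> t_mul A (t_add A x y) z = t_add A (t_mul A x z) (t_mul A y z))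
  \<and> (\<forall>a. \<forall>x\<in>t_car A. \<forall>y\<in>t_car A.
        t_mul A (t_scl A a x) y = t_scl A a (t_mul A x y)
      \<and> t_mul A x (t_scl A a y) = t_scl A a (t_mul A x y))
  \<comment> \<open>involution\<close>
  \<and> (\<forall>x\<in>t_car A. t_star A (t_star A x) = x)
  \<and> (\<forall>x\<in>t_car A. \<forall>y\<in>t_car A. t_star A (t_add A x y) = t_add A (t_star A x) (t_star A y))
  \<and> (\<forall>a. \<forall>x\<in>t_car A. t_star A (t_scl A a x) = t_scl A (cnj a) (t_star A x))
  \<and> (\<forall>x\<in>t_car A. \<forall>y\<in>t_car A. t_star A (t_mul A x y) = t_mul A (t_star A y) (t_star A x))
  \<comment> \<open>C*-norm, complete\<close>
  \<and> (\<forall>x\<in>t_car A. t_norm A x \<ge> 0 \<and> (t_norm A x = 0 \<longleftrightarrow> x = t_zero A))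
  \<and> (\<forall>x\<in>t_car A. \<forall>y\<in>t_car A. t_norm A (t_add A x y) \<le> t_norm A x + t_norm A y)
  \<and> (\<forall>a. \<forall>x\<in>t_car A. t_norm A (t_scl A a x) = cmod a * t_norm A x)
  \<and> (\<forall>x\<in>t_car A. \<forall>y\<in>t_car A. t_norm A (t_mul A x y) \<le> t_norm A x * t_norm A y)
  \<and> (\<forall>x\<in>t_car A. t_norm A (t_mul A (t_star A x) x) = (t_norm A x)\<^sup>2)
  \<and> (\<forall>s. (\<forall>k. s k \<in> t_car A)
         \<and> (\<forall>e>0. \<exists>N. \<forall>m\<ge>N. \<forall>k\<ge>N. t_norm A (t_diff A (s m) (s k)) < e)
       \<longrightarrow> (\<exists>x\<in>t_car A. (\<lambda>k. t_norm A (t_diff A (s k) x)) \<longlonglongrightarrow> 0))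
  \<comment> \<open>faithful tracial state\<close>
  \<and> (\<forall>x\<in>t_car A. \<forall>y\<in>t_car A. t_tr A (t_add A x y) = t_tr A x + t_tr A y)
  \<and> (\<forall>a. \<forall>x\<in>t_car A. t_tr A (t_scl A a x) = a * t_tr A x)
  \<and> t_tr A (t_one A) = 1
  \<and> (\<forall>x\<in>t_car A. \<forall>y\<in>t_car A. t_tr A (t_mul A x y) = t_tr A (t_mul A y x))
  \<and> (\<forall>x\<in>t_car A. Im (t_tr A (t_mul A (t_star A x) x)) = 0
                 \<and> Re (t_tr A (t_mul A (t_star A x) x)) \<ge> 0)
  \<and> (\<forall>x\<in>t_car A. t_tr A (t_mul A (t_star A x) x) = 0 \<longrightarrow> x = t_zero A)
  \<comment> \<open>W*: the operator-norm unit ball is complete for the 2-norm\<close>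
  \<and> (\<forall>s. (\<forall>k. s k \<in> t_car A \<and> t_norm A (s k) \<le> 1)
         \<and> (\<forall>e>0. \<exists>N. \<forall>m\<ge>N. \<forall>k\<ge>N. norm2 A (t_diff A (s m) (s k)) < e)
       \<longrightarrow> (\<exists>x\<in>t_car A. t_norm A x \<le> 1 \<and> (\<lambda>k. norm2 A (t_diff A (s k) x)) \<longlonglongrightarrow> 0))"

datatype tm = Var nat | One | Add tm tm | Mul tm tm | Scal complex tm | Star tm

text \<open>Formulas: real/imaginary parts of traces of *-polynomials, continuous connectives
  (a function of the first k arguments, k = number of subformulas), sup/inf of a
  bound variable over the operator-norm ball D_r.\<close>
datatype fm = ReTr tm | ImTr tm | Conn "(nat \<Rightarrow> real) \<Rightarrow> real" "fm list"
  | SupF real nat fm | InfF real nat fm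

primrec tm_vars :: "tm \<Rightarrow> nat set" where
  "tm_vars (Var i) = {i}"
| "tm_vars One = {}"
| "tm_vars (Add s t) = tm_vars s \<union> tm_vars t"
| "tm_vars (Mul s t) = tm_vars s \<union> tm_vars t"
| "tm_vars (Scal c t) = tm_vars t"
| "tm_vars (Star t) = tm_vars t"

primrec fv :: "fm \<Rightarrow> nat set" where
  "fv (ReTr t) = tm_vars t"
| "fv (ImTr t) = tm_vars t"
| "fv (Conn f ps) = \<Union> (set (map fv ps))"
| "fv (SupF r j p) = fv p - {j}"
| "fv (InfF r j p) = fv p - {j}"

primrec wf :: "fm \<Rightarrow> bool" where
  "wf (ReTr t) = True"
| "wf (ImTr t) = True"
| "wf (Conn f ps) = (continuous_on UNIV f
      \<and> (\<forall>x y. (\<forall>i<length ps. x i = y i) \<longrightarrow> f x = f y) \<and> list_all id (map wf ps))"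
| "wf (SupF r j p) = (r > 0 \<and> wf p)"
| "wf (InfF r j p) = (r > 0 \<and> wf p)"

primrec tm_eval :: "'a tralg \<Rightarrow> (nat \<Rightarrow> 'a) \<Rightarrow> tm \<Rightarrow> 'a" where
  "tm_eval A \<rho> (Var i) = \<rho> i"
| "tm_eval A \<rho> One = t_one A"
| "tm_eval A \<rho> (Add s t) = t_add A (tm_eval A \<rho> s) (tm_eval A \<rho> t)"
| "tm_eval A \<rho> (Mul s t) = t_mul A (tm_eval A \<rho> s) (tm_eval A \<rho> t)"
| "tm_eval A \<rho> (Scal c t) = t_scl A c (tm_eval A \<rho> t)"
| "tm_eval A \<rho> (Star t) = t_star A (tm_eval A \<rho> t)"

definition ball_r :: "'a tralg \<Rightarrow> real \<Rightarrow> 'a set" where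
  "ball_r A r = {x \<in> t_car A. t_norm A x \<le> r}"

primrec fm_eval :: "'a tralg \<Rightarrow> (nat \<Rightarrow> 'a) \<Rightarrow> fm \<Rightarrow> real" where
  "fm_eval A \<rho> (ReTr t) = Re (t_tr A (tm_eval A \<rho> t))"
| "fm_eval A \<rho> (ImTr t) = Im (t_tr A (tm_eval A \<rho> t))"
| "fm_eval A \<rho> (Conn f ps) =
     f (\<lambda>i. if i < length ps then map (fm_eval A \<rho>) ps ! i else 0)"
| "fm_eval A \<rho> (SupF r j p) = (SUP x \<in> ball_r A r. fm_eval A (\<rho>(j := x)) p)"
| "fm_eval A \<rho> (InfF r j p) = (INF x \<in> ball_r A r. fm_eval A (\<rho>(j := x)) p)"

text \<open>Type of the d-tuple X (entries X 0, ..., X (d-1)): value of every well-formed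
  formula with free variables among the first d; other "formulas" get the dummy value 0.\<close>
definition tp :: "'a tralg \<Rightarrow> nat \<Rightarrow> (nat \<Rightarrow> 'a) \<Rightarrow> fm \<Rightarrow> real" where
  "tp A d X = (\<lambda>\<phi>. if wf \<phi> \<and> fv \<phi> \<subseteq> {..<d} then fm_eval A X \<phi> else 0)"

type_synonym mat = "nat \<Rightarrow> nat \<Rightarrow> complex"

definition opnorm :: "nat \<Rightarrow> mat \<Rightarrow> real" where
  "opnorm n M = Sup {sqrt (\<Sum>a<n. (cmod (\<Sum>b<n. M a b * v b))\<^sup>2) | v.
                       (\<Sum>b<n. (cmod (v b))\<^sup>2) \<le> 1}"

definition Mat :: "nat \<Rightarrow> mat tralg" where
  "Mat n = \<lparr> t_car = {M. \<forall>a b. (n \<le> a \<or> n \<le> b) \<longrightarrow> M a b = 0},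
             t_zero = (\<lambda>a b. 0),
             t_one = (\<lambda>a b. if a = b \<and> a < n then 1 else 0),
             t_add = (\<lambda>M N a b. M a b + N a b),
             t_mul = (\<lambda>M N a b. \<Sum>k<n. M a k * N k b),
             t_scl = (\<lambda>c M a b. c * M a b),
             t_star = (\<lambda>M a b. cnj (M b a)),
             t_norm = opnorm n,
             t_tr = (\<lambda>M. (\<Sum>a<n. M a a) / of_nat n) \<rparr>"

definition bseq :: "(nat \<Rightarrow> mat) set" where
  "bseq = {x. (\<forall>n. x n \<in> t_car (Mat n)) \<and> (\<exists>B. \<forall>n. opnorm n (x n) \<le> B)}"

definition ucls :: "nat filter \<Rightarrow> (nat \<Rightarrow> mat) \<Rightarrow> (nat \<Rightarrow> mat) set" where
  "ucls U x = {y \<in> bseq. ((\<lambda>n. norm2 (Mat n) (t_diff (Mat n) (x n) (y n))) \<longlongrightarrow> 0) U}"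

definition rep :: "(nat \<Rightarrow> mat) set \<Rightarrow> nat \<Rightarrow> mat" where
  "rep C = (SOME x. x \<in> C)"

definition Qalg :: "nat filter \<Rightarrow> (nat \<Rightarrow> mat) set tralg" where
  "Qalg U = \<lparr> t_car = ucls U ` bseq,
     t_zero = ucls U (\<lambda>n. t_zero (Mat n)),
     t_one = ucls U (\<lambda>n. t_one (Mat n)),
     t_add = (\<lambda>C D. ucls U (\<lambda>n. t_add (Mat n) (rep C n) (rep D n))),
     t_mul = (\<lambda>C D. ucls U (\<lambda>n. t_mul (Mat n) (rep C n) (rep D n))),
     t_scl = (\<lambda>c C. ucls U (\<lambda>n. t_scl (Mat n) c (rep C n))),
     t_star = (\<lambda>C. ucls U (\<lambda>n. t_star (Mat n) (rep C n))),
     t_norm = (\<lambda>C. INF x \<in> C. Lim U (\<lambda>n. opnorm n (x n))),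
     t_tr = (\<lambda>C. Lim U (\<lambda>n. t_tr (Mat n) (rep C n))) \<rparr>"

definition cidx :: "nat \<Rightarrow> nat \<Rightarrow> (nat \<times> nat \<times> nat \<times> bool) set" where
  "cidx d n = {..<d} \<times> {..<n} \<times> {..<n} \<times> UNIV"

text \<open>Isometry from R^(2dn^2) (standard Euclidean structure) onto M_n(C)^d with
  <X,Y> = sum_j tr_n(X_j^* Y_j); tuples are extended by 0 beyond index d.\<close>
definition mat_emb :: "nat \<Rightarrow> nat \<Rightarrow> (nat \<times> nat \<times> nat \<times> bool \<Rightarrow> real) \<Rightarrow> nat \<Rightarrow> mat" where
  "mat_emb d n c = (\<lambda>j a b. if j < d \<and> a < n \<and> b < n
       then complex_of_real (sqrt (real n)) * Complex (c (j, a, b, True)) (c (j, a, b, False))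
       else 0)"

definition vol :: "nat \<Rightarrow> nat \<Rightarrow> (nat \<Rightarrow> mat) set \<Rightarrow> ennreal" where
  "vol d n S = emeasure (PiM (cidx d n) (\<lambda>_. lborel))
                 (mat_emb d n -` S \<inter> space (PiM (cidx d n) (\<lambda>_. lborel)))"

definition Gamma :: "nat \<Rightarrow> nat \<Rightarrow> real \<Rightarrow> (fm \<Rightarrow> real) set \<Rightarrow> (nat \<Rightarrow> mat) set" where
  "Gamma d n r K = {Y. (\<forall>j<d. Y j \<in> ball_r (Mat n) r) \<and> (\<forall>j\<ge>d. Y j = (\<lambda>a b. 0))
                       \<and> tp (Mat n) d Y \<in> K}"

definition logvol :: "nat \<Rightarrow> nat \<Rightarrow> (nat \<Rightarrow> mat) set \<Rightarrow> ereal" where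
  "logvol d n S = (let v = vol d n S in
     if v = 0 then -\<infinity> else if v = top then \<infinity>
     else ereal (ln (enn2real v) / (real n)\<^sup>2 + 2 * real d * ln (real n)))"

text \<open>Open sets: open in the weak-* (pointwise/product) topology on functions fm => real.\<close>
definition chi_full_r :: "nat filter \<Rightarrow> nat \<Rightarrow> real \<Rightarrow> (fm \<Rightarrow> real) set \<Rightarrow> ereal" where
  "chi_full_r U d r K = (INF V \<in> {V. open V \<and> K \<subseteq> V}. Lim U (\<lambda>n. logvol d n (Gamma d n r V)))"

definition chi_full :: "nat filter \<Rightarrow> nat \<Rightarrow> (fm \<Rightarrow> real) set \<Rightarrow> ereal" where
  "chi_full U d K = (SUP r \<in> {0<..}. chi_full_r U d r K)"

end

(* Finite free entropy provides a radius r such that every weak-* neighbourhood of mu contains,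
   for U-almost every n, the type of an r-bounded tuple of n x n matrices. Formulas are bounded
   and uniformly continuous on operator-norm balls with bounds and moduli independent of n, and
   are uniformly approximated there by formulas with rational data, of which there are countably
   many. A diagonal argument along U over this countable family yields one sequence of
   microstates whose types converge along U to mu on every formula, and Los's theorem for the
   tracial ultraproduct identifies this limit with the type of the tuple these microstates
   define in Q. *)

theory Submission
  imports Defs "HOL-Library.Countable"
begin

section \<open>Matrix norms\<close>

definition vnorm :: "nat \<Rightarrow> (nat \<Rightarrow> complex) \<Rightarrow> real" where
  "vnorm n v = L2_set (\<lambda>b. cmod (v b)) {..<n}"

definition mat_vec :: "nat \<Rightarrow> mat \<Rightarrow> (nat \<Rightarrow> complex) \<Rightarrow> nat \<Rightarrow> complex" where
  "mat_vec n x v = (\<lambda>a. \<Sum>b<n. x a b * v b)"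

definition madd :: "mat \<Rightarrow> mat \<Rightarrow> mat" where
  "madd x y = (\<lambda>a b. x a b + y a b)"

definition msub :: "mat \<Rightarrow> mat \<Rightarrow> mat" where
  "msub x y = (\<lambda>a b. x a b - y a b)"

definition mmul :: "nat \<Rightarrow> mat \<Rightarrow> mat \<Rightarrow> mat" where
  "mmul n x y = (\<lambda>a b. \<Sum>k<n. x a k * y k b)"

definition mscl :: "complex \<Rightarrow> mat \<Rightarrow> mat" where
  "mscl c x = (\<lambda>a b. c * x a b)"

definition mstar :: "mat \<Rightarrow> mat" where
  "mstar x = (\<lambda>a b. cnj (x b a))"

definition mone :: "nat \<Rightarrow> mat" where
  "mone n = (\<lambda>a b. if a = b \<and> a < n then 1 else 0)"

definition mtr :: "nat \<Rightarrow> mat \<Rightarrow> complex" where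
  "mtr n x = (\<Sum>a<n. x a a) / of_nat n"

definition hsnorm :: "nat \<Rightarrow> mat \<Rightarrow> real" where
  "hsnorm n x = L2_set (\<lambda>a. vnorm n (\<lambda>b. x b a)) {..<n} / sqrt (real n)"

lemma Mat_simps [simp]:
  "t_zero (Mat n) = (\<lambda>a b. 0)"
  "t_one (Mat n) = mone n"
  "t_add (Mat n) = madd"
  "t_mul (Mat n) = mmul n"
  "t_scl (Mat n) = mscl"
  "t_star (Mat n) = mstar"
  "t_norm (Mat n) = opnorm n"
  "t_tr (Mat n) = mtr n"
  by (auto simp: Mat_def mmul_def madd_def mscl_def mstar_def mone_def mtr_def fun_eq_iff)

lemma car_Mat: "x \<in> t_car (Mat n) \<longleftrightarrow> (\<forall>a b. n \<le> a \<or> n \<le> b \<longrightarrow> x a b = 0)"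
  by (simp add: Mat_def)

lemma car_Mat_closed:
  "x \<in> t_car (Mat n) \<Longrightarrow> y \<in> t_car (Mat n) \<Longrightarrow> madd x y \<in> t_car (Mat n)"
  "x \<in> t_car (Mat n) \<Longrightarrow> y \<in> t_car (Mat n) \<Longrightarrow> mmul n x y \<in> t_car (Mat n)"
  "x \<in> t_car (Mat n) \<Longrightarrow> mscl c x \<in> t_car (Mat n)"
  "x \<in> t_car (Mat n) \<Longrightarrow> mstar x \<in> t_car (Mat n)"
  "mone n \<in> t_car (Mat n)"
  "(\<lambda>a b. 0) \<in> t_car (Mat n)"
  by (auto simp: car_Mat madd_def mmul_def mscl_def mstar_def mone_def)

lemma t_diff_Mat: "t_diff (Mat n) x y = msub x y"
  by (simp add: t_diff_def madd_def mscl_def msub_def)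

lemma vnorm_nonneg [simp]: "0 \<le> vnorm n v"
  by (simp add: vnorm_def)

lemma vnorm_zero [simp]: "vnorm n (\<lambda>b. 0) = 0"
  by (simp add: vnorm_def L2_set_def)

lemma vnorm_eq_0_iff: "vnorm n v = 0 \<longleftrightarrow> (\<forall>b<n. v b = 0)"
  unfolding vnorm_def by (auto simp: L2_set_eq_0_iff)

lemma vnorm_cong: "(\<And>b. b < n \<Longrightarrow> v b = w b) \<Longrightarrow> vnorm n v = vnorm n w"
  unfolding vnorm_def by (rule L2_set_cong) auto

lemma vnorm_scale: "vnorm n (\<lambda>b. c * v b) = cmod c * vnorm n v"
  unfolding vnorm_def by (simp add: L2_set_right_distrib norm_mult)

lemma vnorm_add_le: "vnorm n (\<lambda>a. u a + w a) \<le> vnorm n u + vnorm n w"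
proof -
  have "vnorm n (\<lambda>a. u a + w a) \<le> L2_set (\<lambda>a. cmod (u a) + cmod (w a)) {..<n}"
    unfolding vnorm_def by (rule L2_set_mono) (auto intro: norm_triangle_ineq)
  also have "\<dots> \<le> vnorm n u + vnorm n w"
    unfolding vnorm_def by (rule L2_set_triangle_ineq)
  finally show ?thesis .
qed

lemma norm_sum_mult_le_vnorm: "cmod (\<Sum>b<n. u b * v b) \<le> vnorm n u * vnorm n v"
proof -
  have "cmod (\<Sum>b<n. u b * v b) \<le> (\<Sum>b<n. cmod (u b * v b))"
    by (rule norm_sum)
  also have "\<dots> = (\<Sum>b<n. \<bar>cmod (u b)\<bar> * \<bar>cmod (v b)\<bar>)"
    by (simp add: norm_mult)
  also have "\<dots> \<le> vnorm n u * vnorm n v"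
    unfolding vnorm_def by (rule L2_set_mult_ineq)
  finally show ?thesis .
qed

lemma mat_vec_cong: "(\<And>b. b < n \<Longrightarrow> v b = w b) \<Longrightarrow> mat_vec n x v = mat_vec n x w"
  unfolding mat_vec_def by auto

lemma mat_vec_scale: "mat_vec n x (\<lambda>b. c * v b) = (\<lambda>a. c * mat_vec n x v a)"
  unfolding mat_vec_def by (auto simp: sum_distrib_left mult.left_commute)

lemma mat_vec_madd: "mat_vec n (madd x y) v = (\<lambda>a. mat_vec n x v a + mat_vec n y v a)"
  unfolding mat_vec_def madd_def by (auto simp: distrib_right sum.distrib)

lemma mat_vec_mmul: "mat_vec n (mmul n x y) v = mat_vec n x (mat_vec n y v)"
  unfolding mat_vec_def mmul_def
  by (auto simp: sum_distrib_right sum_distrib_left mult.assoc intro: sum.swap)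

lemma mat_vec_mscl: "mat_vec n (mscl c x) v = (\<lambda>a. c * mat_vec n x v a)"
  unfolding mat_vec_def mscl_def by (auto simp: sum_distrib_left mult.assoc)

lemma vnorm_mat_vec_le: "vnorm n (mat_vec n x v) \<le> L2_set (\<lambda>a. vnorm n (x a)) {..<n} * vnorm n v"
proof -
  have "vnorm n (mat_vec n x v) = L2_set (\<lambda>a. cmod (\<Sum>b<n. x a b * v b)) {..<n}"
    by (simp add: vnorm_def mat_vec_def)
  also have "\<dots> \<le> L2_set (\<lambda>a. vnorm n (x a) * vnorm n v) {..<n}"
    by (rule L2_set_mono) (auto intro: norm_sum_mult_le_vnorm)
  finally show ?thesis
    by (simp add: L2_set_left_distrib)
qed

lemma opnorm_eq_Sup: "opnorm n x = Sup {vnorm n (mat_vec n x v) | v. vnorm n v \<le> 1}"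
  unfolding opnorm_def vnorm_def mat_vec_def L2_set_def by simp

lemma bdd_above_opnorm_set: "bdd_above {vnorm n (mat_vec n x v) | v. vnorm n v \<le> 1}"
proof (rule bdd_aboveI)
  fix y assume "y \<in> {vnorm n (mat_vec n x v) | v. vnorm n v \<le> 1}"
  then obtain v where "y = vnorm n (mat_vec n x v)" "vnorm n v \<le> 1"
    by auto
  moreover have "0 \<le> L2_set (\<lambda>a. vnorm n (x a)) {..<n}"
    by (rule L2_set_nonneg)
  ultimately show "y \<le> L2_set (\<lambda>a. vnorm n (x a)) {..<n}"
    using vnorm_mat_vec_le[of n x v] mult_left_le[of "vnorm n v"] by (metis order_trans)
qed

lemma opnorm_nonneg: "0 \<le> opnorm n x"
proof -
  have "vnorm n (mat_vec n x (\<lambda>_. 0)) \<le> opnorm n x"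
    unfolding opnorm_eq_Sup by (rule cSup_upper[OF _ bdd_above_opnorm_set]) force
  then show ?thesis
    using vnorm_nonneg order_trans by blast
qed

lemma vnorm_mat_vec_le_opnorm: "vnorm n (mat_vec n x v) \<le> opnorm n x * vnorm n v"
proof (cases "vnorm n v = 0")
  case True
  then have "mat_vec n x v = mat_vec n x (\<lambda>_. 0)"
    by (intro mat_vec_cong) (simp add: vnorm_eq_0_iff)
  then show ?thesis
    using True by (simp add: mat_vec_def)
next
  case False
  then have pos: "vnorm n v > 0"
    using vnorm_nonneg[of n v] by linarith
  define w where "w = (\<lambda>b. complex_of_real (1 / vnorm n v) * v b)"
  have "vnorm n w = 1"
    using pos unfolding w_def vnorm_scale by (simp add: norm_divide)
  then have "vnorm n (mat_vec n x w) \<le> opnorm n x"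
    unfolding opnorm_eq_Sup by (intro cSup_upper[OF _ bdd_above_opnorm_set]) auto
  moreover have "vnorm n (mat_vec n x w) = vnorm n (mat_vec n x v) / vnorm n v"
    using pos unfolding w_def mat_vec_scale vnorm_scale by (simp add: norm_divide)
  ultimately show ?thesis
    using pos by (simp add: divide_le_eq mult.commute)
qed

lemma opnorm_leI:
  assumes "\<And>v. vnorm n (mat_vec n x v) \<le> K * vnorm n v" and "0 \<le> K"
  shows "opnorm n x \<le> K"
  unfolding opnorm_eq_Sup
proof (rule cSup_least)
  show "{vnorm n (mat_vec n x v) |v. vnorm n v \<le> 1} \<noteq> {}"
    by (auto intro!: exI[of _ "\<lambda>_. 0"])
next
  fix y assume "y \<in> {vnorm n (mat_vec n x v) |v. vnorm n v \<le> 1}"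
  then obtain v where "y = vnorm n (mat_vec n x v)" "vnorm n v \<le> 1"
    by auto
  then show "y \<le> K"
    using assms(1)[of v] mult_left_le[of "vnorm n v" K] assms(2) by auto
qed

lemma opnorm_madd_le: "opnorm n (madd x y) \<le> opnorm n x + opnorm n y"
proof (rule opnorm_leI)
  fix v
  have "vnorm n (mat_vec n (madd x y) v) \<le> vnorm n (mat_vec n x v) + vnorm n (mat_vec n y v)"
    unfolding mat_vec_madd by (rule vnorm_add_le)
  also have "\<dots> \<le> (opnorm n x + opnorm n y) * vnorm n v"
    using vnorm_mat_vec_le_opnorm[of n x v] vnorm_mat_vec_le_opnorm[of n y v]
    by (simp add: distrib_right)
  finally show "vnorm n (mat_vec n (madd x y) v) \<le> (opnorm n x + opnorm n y) * vnorm n v" .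
qed (intro add_nonneg_nonneg opnorm_nonneg)

lemma opnorm_mmul_le: "opnorm n (mmul n x y) \<le> opnorm n x * opnorm n y"
proof (rule opnorm_leI)
  fix v
  have "vnorm n (mat_vec n (mmul n x y) v) \<le> opnorm n x * vnorm n (mat_vec n y v)"
    unfolding mat_vec_mmul by (rule vnorm_mat_vec_le_opnorm)
  also have "\<dots> \<le> opnorm n x * (opnorm n y * vnorm n v)"
    by (intro mult_left_mono vnorm_mat_vec_le_opnorm opnorm_nonneg)
  finally show "vnorm n (mat_vec n (mmul n x y) v) \<le> opnorm n x * opnorm n y * vnorm n v"
    by (simp add: mult.assoc)
qed (intro mult_nonneg_nonneg opnorm_nonneg)

lemma opnorm_mscl_le: "opnorm n (mscl c x) \<le> cmod c * opnorm n x"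
proof (rule opnorm_leI)
  fix v
  have "vnorm n (mat_vec n (mscl c x) v) = cmod c * vnorm n (mat_vec n x v)"
    unfolding mat_vec_mscl by (rule vnorm_scale)
  also have "\<dots> \<le> cmod c * (opnorm n x * vnorm n v)"
    by (intro mult_left_mono vnorm_mat_vec_le_opnorm) auto
  finally show "vnorm n (mat_vec n (mscl c x) v) \<le> cmod c * opnorm n x * vnorm n v"
    by (simp add: mult.assoc)
qed (intro mult_nonneg_nonneg opnorm_nonneg norm_ge_zero)

lemma opnorm_mone_le: "opnorm n (mone n) \<le> 1"
proof (rule opnorm_leI)
  fix v :: "nat \<Rightarrow> complex"
  have "(\<Sum>b<n. (if a = b \<and> a < n then 1 else 0) * v b) = (if a < n then v a else 0)" for a
    by (cases "a < n") (simp_all add: if_distrib[where f="\<lambda>z. z * _"] sum.delta' cong: if_cong)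
  then have "mat_vec n (mone n) v = (\<lambda>a. if a < n then v a else 0)"
    unfolding mat_vec_def mone_def by auto
  then have "vnorm n (mat_vec n (mone n) v) = vnorm n v"
    by (auto intro: vnorm_cong)
  then show "vnorm n (mat_vec n (mone n) v) \<le> 1 * vnorm n v"
    by simp
qed simp

lemma opnorm_zero [simp]: "opnorm n (\<lambda>a b. 0) = 0"
proof -
  have "opnorm n (\<lambda>a b. 0) \<le> 0"
    by (rule opnorm_leI) (auto simp: mat_vec_def)
  then show ?thesis
    using opnorm_nonneg[of n "\<lambda>a b. 0"] by linarith
qed

text \<open>The C*-identity in the form
  \<open>\<parallel>x\<^sup>*v\<parallel>\<^sup>2 = \<langle>v, x x\<^sup>* v\<rangle> \<le> \<parallel>v\<parallel> \<parallel>x x\<^sup>* v\<parallel>\<close>, which gives \<open>\<parallel>x\<^sup>*\<parallel> \<le> \<parallel>x\<parallel>\<close>.\<close>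

lemma vnorm_mat_vec_mstar_sq_le:
  "(vnorm n (mat_vec n (mstar x) v))\<^sup>2 \<le> vnorm n v * vnorm n (mat_vec n x (mat_vec n (mstar x) v))"
proof -
  define w where "w = mat_vec n (mstar x) v"
  have "(\<Sum>a<n. cnj (w a) * w a) = (\<Sum>a<n. \<Sum>b<n. cnj (w a) * (cnj (x b a) * v b))"
    unfolding w_def mat_vec_def mstar_def by (simp add: sum_distrib_left)
  also have "\<dots> = (\<Sum>b<n. \<Sum>a<n. cnj (w a) * (cnj (x b a) * v b))"
    by (rule sum.swap)
  also have "\<dots> = (\<Sum>b<n. v b * cnj (mat_vec n x w b))"
    unfolding mat_vec_def by (simp add: sum_distrib_left mult.commute mult.left_commute)
  finally have inner: "(\<Sum>a<n. cnj (w a) * w a) = (\<Sum>b<n. v b * cnj (mat_vec n x w b))" .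
  have "\<And>a. cnj (w a) * w a = complex_of_real ((cmod (w a))\<^sup>2)"
    using complex_norm_square by (metis of_real_power mult.commute)
  then have "(\<Sum>a<n. cnj (w a) * w a) = complex_of_real (\<Sum>a<n. (cmod (w a))\<^sup>2)"
    by (simp add: of_real_sum)
  also have "(\<Sum>a<n. (cmod (w a))\<^sup>2) = (vnorm n w)\<^sup>2"
    unfolding vnorm_def L2_set_def by (simp add: sum_nonneg)
  finally have "(vnorm n w)\<^sup>2 = cmod (\<Sum>b<n. v b * cnj (mat_vec n x w b))"
    using inner by (metis norm_of_real abs_of_nonneg zero_le_power2)
  also have "\<dots> \<le> vnorm n v * vnorm n (\<lambda>b. cnj (mat_vec n x w b))"
    by (rule norm_sum_mult_le_vnorm)
  also have "vnorm n (\<lambda>b. cnj (mat_vec n x w b)) = vnorm n (mat_vec n x w)"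
    by (simp add: vnorm_def)
  finally show ?thesis
    unfolding w_def .
qed

lemma opnorm_mstar_le: "opnorm n (mstar x) \<le> opnorm n x"
proof (rule opnorm_leI)
  fix v
  define w where "w = mat_vec n (mstar x) v"
  have "(vnorm n w)\<^sup>2 \<le> vnorm n v * (opnorm n x * vnorm n w)"
    using vnorm_mat_vec_mstar_sq_le[of n x v] vnorm_mat_vec_le_opnorm[of n x w]
    unfolding w_def[symmetric] by (meson mult_left_mono order_trans vnorm_nonneg)
  then have "vnorm n w * vnorm n w \<le> (opnorm n x * vnorm n v) * vnorm n w"
    by (simp add: power2_eq_square algebra_simps)
  then show "vnorm n (mat_vec n (mstar x) v) \<le> opnorm n x * vnorm n v"
    using vnorm_nonneg[of n w] opnorm_nonneg[of n x] vnorm_nonneg[of n v] unfolding w_def[symmetric]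
    by (metis mult_right_le_imp_le nle_le not_le mult_nonneg_nonneg order_le_less)
qed (rule opnorm_nonneg)

lemma norm_mtr_le_opnorm: "cmod (mtr n x) \<le> opnorm n x"
proof (cases "n = 0")
  case True
  then show ?thesis by (simp add: mtr_def opnorm_nonneg)
next
  case False
  have diag: "cmod (x a a) \<le> opnorm n x" if "a < n" for a
  proof -
    define e where "e = (\<lambda>b. if b = a then (1::complex) else 0)"
    have "vnorm n e = 1"
      using that unfolding vnorm_def L2_set_def e_def
      by (simp add: if_distrib[where f="\<lambda>z. (cmod z)\<^sup>2"] sum.delta cong: if_cong)
    have "mat_vec n x e = (\<lambda>c. x c a)"
      unfolding mat_vec_def e_def using that by (auto simp: if_distrib sum.delta cong: if_cong)
    then have "cmod (x a a) \<le> vnorm n (mat_vec n x e)"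
      unfolding vnorm_def using that by (auto intro: member_le_L2_set)
    also have "\<dots> \<le> opnorm n x"
      using vnorm_mat_vec_le_opnorm[of n x e] \<open>vnorm n e = 1\<close> by simp
    finally show ?thesis .
  qed
  have "cmod (\<Sum>a<n. x a a) \<le> (\<Sum>a<n. opnorm n x)"
    using norm_sum[of "\<lambda>a. x a a" "{..<n}"] sum_mono[of "{..<n}" "\<lambda>a. cmod (x a a)" "\<lambda>_. opnorm n x"] diag
    by (meson lessThan_iff order_trans)
  then have "cmod (\<Sum>a<n. x a a) \<le> real n * opnorm n x"
    by simp
  then show ?thesis
    using False unfolding mtr_def by (simp add: norm_divide divide_le_eq mult.commute)
qed

lemma hsnorm_nonneg [simp]: "0 \<le> hsnorm n x"
  by (simp add: hsnorm_def)

lemma hsnorm_zero [simp]: "hsnorm n (\<lambda>a b. 0) = 0"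
  by (simp add: hsnorm_def L2_set_def vnorm_def)

lemma hsnorm_eq: "hsnorm n x = sqrt ((\<Sum>a<n. \<Sum>b<n. (cmod (x b a))\<^sup>2) / real n)"
proof -
  have "L2_set (\<lambda>a. vnorm n (\<lambda>b. x b a)) {..<n} = sqrt (\<Sum>a<n. \<Sum>b<n. (cmod (x b a))\<^sup>2)"
    unfolding L2_set_def vnorm_def by (simp add: sum_nonneg)
  then show ?thesis
    unfolding hsnorm_def by (simp add: real_sqrt_divide)
qed

lemma norm2_Mat: "norm2 (Mat n) x = hsnorm n x"
proof -
  have "mmul n (mstar x) x a a = complex_of_real (\<Sum>k<n. (cmod (x k a))\<^sup>2)" for a
  proof -
    have "\<And>k. cnj (x k a) * x k a = complex_of_real ((cmod (x k a))\<^sup>2)"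
      using complex_norm_square by (metis of_real_power mult.commute)
    then show ?thesis
      unfolding mmul_def mstar_def by (simp add: of_real_sum)
  qed
  then have "mtr n (mmul n (mstar x) x) = complex_of_real ((\<Sum>a<n. \<Sum>b<n. (cmod (x b a))\<^sup>2) / real n)"
    unfolding mtr_def by (simp add: of_real_sum)
  then show ?thesis
    unfolding norm2_def hsnorm_eq by simp
qed

lemma hsnorm_mmul_le_left: "hsnorm n (mmul n x y) \<le> opnorm n x * hsnorm n y"
proof -
  have col: "(\<lambda>b. mmul n x y b a) = mat_vec n x (\<lambda>k. y k a)" for a
    unfolding mmul_def mat_vec_def by auto
  have "L2_set (\<lambda>a. vnorm n (\<lambda>b. mmul n x y b a)) {..<n}
      \<le> L2_set (\<lambda>a. opnorm n x * vnorm n (\<lambda>b. y b a)) {..<n}"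
    unfolding col by (rule L2_set_mono) (auto intro: vnorm_mat_vec_le_opnorm)
  also have "\<dots> = opnorm n x * L2_set (\<lambda>a. vnorm n (\<lambda>b. y b a)) {..<n}"
    by (simp add: L2_set_right_distrib opnorm_nonneg)
  finally show ?thesis
    unfolding hsnorm_def using divide_right_mono[of _ _ "sqrt (real n)"] by simp
qed

lemma hsnorm_mstar: "hsnorm n (mstar x) = hsnorm n x"
proof -
  have "(\<Sum>a<n. \<Sum>b<n. (cmod (x a b))\<^sup>2) = (\<Sum>a<n. \<Sum>b<n. (cmod (x b a))\<^sup>2)"
    by (rule sum.swap)
  then show ?thesis
    unfolding hsnorm_eq mstar_def by simp
qed

lemma mstar_mmul: "mstar (mmul n x y) = mmul n (mstar y) (mstar x)"
  unfolding mstar_def mmul_def by (auto simp: fun_eq_iff mult.commute)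

lemma hsnorm_mmul_le_right: "hsnorm n (mmul n x y) \<le> hsnorm n x * opnorm n y"
proof -
  have "hsnorm n (mmul n x y) = hsnorm n (mmul n (mstar y) (mstar x))"
    by (metis mstar_mmul hsnorm_mstar)
  also have "\<dots> \<le> opnorm n (mstar y) * hsnorm n (mstar x)"
    by (rule hsnorm_mmul_le_left)
  also have "\<dots> \<le> opnorm n y * hsnorm n x"
    unfolding hsnorm_mstar by (intro mult_right_mono opnorm_mstar_le) auto
  finally show ?thesis
    by (simp add: mult.commute)
qed

lemma hsnorm_madd_le: "hsnorm n (madd x y) \<le> hsnorm n x + hsnorm n y"
proof -
  have "L2_set (\<lambda>a. vnorm n (\<lambda>b. madd x y b a)) {..<n}
      \<le> L2_set (\<lambda>a. vnorm n (\<lambda>b. x b a) + vnorm n (\<lambda>b. y b a)) {..<n}"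
    unfolding madd_def by (rule L2_set_mono) (auto intro: vnorm_add_le)
  also have "\<dots> \<le> L2_set (\<lambda>a. vnorm n (\<lambda>b. x b a)) {..<n} + L2_set (\<lambda>a. vnorm n (\<lambda>b. y b a)) {..<n}"
    by (rule L2_set_triangle_ineq)
  finally show ?thesis
    unfolding hsnorm_def by (simp add: divide_right_mono add_divide_distrib[symmetric])
qed

lemma hsnorm_mscl: "hsnorm n (mscl c x) = cmod c * hsnorm n x"
  unfolding hsnorm_def mscl_def vnorm_scale by (simp add: L2_set_right_distrib[symmetric])

lemma norm_mtr_le_hsnorm: "cmod (mtr n x) \<le> hsnorm n x"
proof (cases "n = 0")
  case True
  then show ?thesis by (simp add: mtr_def)
next
  case False
  define L where "L = L2_set (\<lambda>a. vnorm n (\<lambda>b. x b a)) {..<n}"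
  have "cmod (\<Sum>a<n. x a a) \<le> (\<Sum>a<n. \<bar>cmod (x a a)\<bar> * \<bar>1\<bar>)"
    using norm_sum[of "\<lambda>a. x a a" "{..<n}"] by simp
  also have "\<dots> \<le> L2_set (\<lambda>a. cmod (x a a)) {..<n} * L2_set (\<lambda>_. 1) {..<n}"
    by (rule L2_set_mult_ineq)
  also have "\<dots> \<le> L * sqrt (real n)"
  proof -
    have "L2_set (\<lambda>a. cmod (x a a)) {..<n} \<le> L"
      unfolding L_def by (rule L2_set_mono) (auto simp: vnorm_def intro: member_le_L2_set)
    then show ?thesis
      by (simp add: L2_set_constant mult_right_mono)
  qed
  finally have "cmod (mtr n x) \<le> L * sqrt (real n) / real n"
    using False unfolding mtr_def by (simp add: norm_divide divide_right_mono)
  also have "L * sqrt (real n) / real n = L / sqrt (real n)"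
    using False by (metis real_div_sqrt of_nat_0_le_iff times_divide_eq_right divide_divide_eq_right)
  finally show ?thesis
    unfolding hsnorm_def L_def .
qed

lemma mtr_msub: "mtr n (msub x y) = mtr n x - mtr n y"
  unfolding mtr_def msub_def by (simp add: sum_subtractf diff_divide_distrib)

lemma msub_madd_madd: "msub (madd x y) (madd x' y') = madd (msub x x') (msub y y')"
  unfolding msub_def madd_def by (auto simp: fun_eq_iff algebra_simps)

lemma msub_mmul_mmul:
  "msub (mmul n x y) (mmul n x' y') = madd (mmul n x (msub y y')) (mmul n (msub x x') y')"
  unfolding msub_def madd_def mmul_def
  by (auto simp: fun_eq_iff sum_subtractf[symmetric] sum.distrib[symmetric] algebra_simps)

lemma msub_mscl_mscl: "msub (mscl c x) (mscl c' y) = madd (mscl c (msub x y)) (mscl (c - c') y)"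
  unfolding msub_def madd_def mscl_def by (auto simp: algebra_simps)

lemma msub_mstar_mstar: "msub (mstar x) (mstar y) = mstar (msub x y)"
  unfolding msub_def mstar_def by auto

lemma msub_self [simp]: "msub x x = (\<lambda>a b. 0)"
  unfolding msub_def by auto

lemma msub_via_mid: "msub x z = madd (msub x y) (msub y z)"
  unfolding msub_def madd_def by auto

lemma msub_commute: "msub x y = mscl (-1) (msub y x)"
  unfolding msub_def mscl_def by auto

lemma opnorm_msub_commute: "opnorm n (msub x y) = opnorm n (msub y x)"
proof -
  have le: "opnorm n (msub x y) \<le> opnorm n (msub y x)" for x y
    using opnorm_mscl_le[of n "-1" "msub y x"] by (simp add: msub_commute[of x y])
  show ?thesis
    using le[of x y] le[of y x] by linarith
qed

lemma hsnorm_msub_commute: "hsnorm n (msub x y) = hsnorm n (msub y x)"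
  using msub_commute[of x y] by (simp add: hsnorm_mscl)

lemma opnorm_triangle_msub: "opnorm n y \<le> opnorm n x + opnorm n (msub y x)"
  using opnorm_madd_le[of n x "msub y x"] by (simp add: madd_def msub_def)

lemma opnorm_madd_diff_le:
  "opnorm n (msub (madd x y) (madd x' y')) \<le> opnorm n (msub x x') + opnorm n (msub y y')"
  unfolding msub_madd_madd by (rule opnorm_madd_le)

lemma opnorm_mmul_diff_le:
  "opnorm n (msub (mmul n x y) (mmul n x' y'))
     \<le> opnorm n x * opnorm n (msub y y') + opnorm n (msub x x') * opnorm n y'"
  unfolding msub_mmul_mmul
  by (rule order_trans[OF opnorm_madd_le add_mono[OF opnorm_mmul_le opnorm_mmul_le]])

lemma opnorm_mscl_diff_le:
  "opnorm n (msub (mscl c x) (mscl c' x')) \<le> cmod c * opnorm n (msub x x') + cmod (c - c') * opnorm n x'"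
  unfolding msub_mscl_mscl
  by (rule order_trans[OF opnorm_madd_le add_mono[OF opnorm_mscl_le opnorm_mscl_le]])

lemma opnorm_mstar_diff_le: "opnorm n (msub (mstar x) (mstar x')) \<le> opnorm n (msub x x')"
  unfolding msub_mstar_mstar by (rule opnorm_mstar_le)

lemma hsnorm_madd_diff_le:
  "hsnorm n (msub (madd x y) (madd x' y')) \<le> hsnorm n (msub x x') + hsnorm n (msub y y')"
  unfolding msub_madd_madd by (rule hsnorm_madd_le)

lemma hsnorm_mmul_diff_le:
  "hsnorm n (msub (mmul n x y) (mmul n x' y'))
     \<le> opnorm n x * hsnorm n (msub y y') + hsnorm n (msub x x') * opnorm n y'"
  unfolding msub_mmul_mmul
  by (rule order_trans[OF hsnorm_madd_le add_mono[OF hsnorm_mmul_le_left hsnorm_mmul_le_right]])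

lemma hsnorm_mscl_diff: "hsnorm n (msub (mscl c x) (mscl c x')) = cmod c * hsnorm n (msub x x')"
proof -
  have "msub (mscl c x) (mscl c x') = mscl c (msub x x')"
    unfolding msub_def mscl_def by (auto simp: algebra_simps)
  then show ?thesis
    by (simp add: hsnorm_mscl)
qed

lemma hsnorm_mstar_diff: "hsnorm n (msub (mstar x) (mstar x')) = hsnorm n (msub x x')"
  unfolding msub_mstar_mstar by (rule hsnorm_mstar)

lemma norm_mtr_diff_le_opnorm: "cmod (mtr n x - mtr n y) \<le> opnorm n (msub x y)"
  using norm_mtr_le_opnorm[of n "msub x y"] by (simp add: mtr_msub)

lemma norm_mtr_diff_le_hsnorm: "cmod (mtr n x - mtr n y) \<le> hsnorm n (msub x y)"
  using norm_mtr_le_hsnorm[of n "msub x y"] by (simp add: mtr_msub)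

section \<open>Uniform estimates for formulas in matrix algebras\<close>

lemma ball_r_Mat: "x \<in> ball_r (Mat n) R \<longleftrightarrow> x \<in> t_car (Mat n) \<and> opnorm n x \<le> R"
  by (simp add: ball_r_def)

lemma zero_in_ball_r_Mat: "0 \<le> r \<Longrightarrow> (\<lambda>a b. 0) \<in> ball_r (Mat n) r"
  by (simp add: ball_r_Mat car_Mat_closed)

lemma ball_r_Mat_rescale:
  assumes z: "z \<in> ball_r (Mat n) a" and "0 < a" "0 \<le> b"
  obtains w where "w \<in> ball_r (Mat n) b" "opnorm n (msub z w) \<le> \<bar>a - b\<bar>"
proof -
  define s where "s = min 1 (b / a)"
  have s: "0 \<le> s" "s \<le> 1" "s * a \<le> b" "(1 - s) * a \<le> \<bar>a - b\<bar>"
    using \<open>0 < a\<close> \<open>0 \<le> b\<close> by (auto simp: s_def min_def field_simps)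
  have "z \<in> t_car (Mat n)" and za: "opnorm n z \<le> a"
    using z by (auto simp: ball_r_Mat)
  have "opnorm n (mscl (of_real s) z) \<le> s * opnorm n z"
    using opnorm_mscl_le[of n "of_real s" z] s by simp
  also have "\<dots> \<le> b"
    using za s by (meson mult_left_mono order_trans)
  finally have w: "mscl (of_real s) z \<in> ball_r (Mat n) b"
    using \<open>z \<in> t_car (Mat n)\<close> by (simp add: ball_r_Mat car_Mat_closed)
  have "msub z (mscl (of_real s) z) = mscl (of_real (1 - s)) z"
    unfolding msub_def mscl_def by (auto simp: algebra_simps)
  moreover have "cmod (of_real (1 - s)) = 1 - s"
    using s by (metis abs_of_nonneg diff_ge_0_iff_ge norm_of_real)
  ultimately have "opnorm n (msub z (mscl (of_real s) z)) \<le> (1 - s) * opnorm n z"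
    using opnorm_mscl_le[of n "of_real (1 - s)" z] by metis
  also have "\<dots> \<le> \<bar>a - b\<bar>"
    using za s by (meson mult_left_mono diff_ge_0_iff_ge order_trans)
  finally show thesis
    using w by (rule that[rotated])
qed

definition env_ball :: "nat \<Rightarrow> real \<Rightarrow> (nat \<Rightarrow> mat) \<Rightarrow> bool" where
  "env_ball n R \<rho> \<longleftrightarrow> (\<forall>j. \<rho> j \<in> ball_r (Mat n) R)"

definition env_close :: "nat \<Rightarrow> real \<Rightarrow> (nat \<Rightarrow> mat) \<Rightarrow> (nat \<Rightarrow> mat) \<Rightarrow> bool" where
  "env_close n \<delta> \<rho> \<rho>' \<longleftrightarrow> (\<forall>j. opnorm n (msub (\<rho> j) (\<rho>' j)) \<le> \<delta>)"

lemma env_ball_opnorm: "env_ball n R \<rho> \<Longrightarrow> opnorm n (\<rho> j) \<le> R"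
  by (simp add: env_ball_def ball_r_Mat)

lemma env_ball_upd:
  "env_ball n R \<rho> \<Longrightarrow> z \<in> ball_r (Mat n) r \<Longrightarrow> R \<le> R' \<Longrightarrow> r \<le> R' \<Longrightarrow> env_ball n R' (\<rho>(j := z))"
  unfolding env_ball_def ball_r_Mat by (metis fun_upd_apply order_trans)

lemma env_close_refl: "0 \<le> \<delta> \<Longrightarrow> env_close n \<delta> \<rho> \<rho>"
  by (simp add: env_close_def)

lemma env_close_mono: "env_close n \<delta> \<rho> \<rho>' \<Longrightarrow> \<delta> \<le> \<delta>' \<Longrightarrow> env_close n \<delta>' \<rho> \<rho>'"
  unfolding env_close_def by (meson order_trans)

lemma env_close_upd:
  "env_close n \<delta> \<rho> \<rho>' \<Longrightarrow> opnorm n (msub z w) \<le> \<delta> \<Longrightarrow> env_close n \<delta> (\<rho>(j := z)) (\<rho>'(j := w))"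
  unfolding env_close_def by auto

lemma env_close_nonneg: "env_close n \<delta> \<rho> \<rho>' \<Longrightarrow> 0 \<le> \<delta>"
  unfolding env_close_def by (meson opnorm_nonneg order_trans)

primrec tm_bound :: "real \<Rightarrow> tm \<Rightarrow> real" where
  "tm_bound R (Var i) = \<bar>R\<bar>"
| "tm_bound R One = 1"
| "tm_bound R (Add s t) = tm_bound R s + tm_bound R t"
| "tm_bound R (Mul s t) = tm_bound R s * tm_bound R t"
| "tm_bound R (Scal c t) = cmod c * tm_bound R t"
| "tm_bound R (Star t) = tm_bound R t"

primrec tm_lip :: "real \<Rightarrow> tm \<Rightarrow> real" where
  "tm_lip R (Var i) = 1"
| "tm_lip R One = 0"
| "tm_lip R (Add s t) = tm_lip R s + tm_lip R t"
| "tm_lip R (Mul s t) = tm_bound R s * tm_lip R t + tm_lip R s * tm_bound R t"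
| "tm_lip R (Scal c t) = cmod c * tm_lip R t"
| "tm_lip R (Star t) = tm_lip R t"

lemma tm_bound_nonneg: "0 \<le> tm_bound R t"
  by (induction t) auto

lemma tm_lip_nonneg: "0 \<le> tm_lip R t"
  by (induction t) (auto simp: tm_bound_nonneg)

lemma opnorm_tm_eval_le:
  "(\<And>j. opnorm n (\<rho> j) \<le> R) \<Longrightarrow> opnorm n (tm_eval (Mat n) \<rho> t) \<le> tm_bound R t"
proof (induction t)
  case (Var i)
  then show ?case by simp (meson abs_ge_self order_trans)
next
  case One
  then show ?case by (simp add: opnorm_mone_le)
next
  case (Add s t)
  then show ?case by simp (meson add_mono opnorm_madd_le order_trans)
next
  case (Mul s t)
  then show ?case
    by simp (meson mult_mono opnorm_mmul_le order_trans opnorm_nonneg tm_bound_nonneg)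
next
  case (Scal c t)
  then show ?case by simp (meson mult_left_mono norm_ge_zero opnorm_mscl_le order_trans)
next
  case (Star t)
  then show ?case by simp (meson opnorm_mstar_le order_trans)
qed

lemma opnorm_tm_eval_diff_le:
  assumes bnd: "\<And>j. opnorm n (\<rho> j) \<le> R" "\<And>j. opnorm n (\<rho>' j) \<le> R"
    and close: "env_close n \<delta> \<rho> \<rho>'"
  shows "opnorm n (msub (tm_eval (Mat n) \<rho> t) (tm_eval (Mat n) \<rho>' t)) \<le> tm_lip R t * \<delta>"
proof (induction t)
  case (Var i)
  then show ?case using close by (simp add: env_close_def)
next
  case One
  then show ?case by simp
next
  case (Add s t)
  then show ?case
    using opnorm_madd_diff_le by (simp add: distrib_right) (meson add_mono order_trans)
next
  case (Mul s t)
  have "0 \<le> \<delta>"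
    using close by (rule env_close_nonneg)
  then have "opnorm n (tm_eval (Mat n) \<rho> s) * opnorm n (msub (tm_eval (Mat n) \<rho> t) (tm_eval (Mat n) \<rho>' t))
      + opnorm n (msub (tm_eval (Mat n) \<rho> s) (tm_eval (Mat n) \<rho>' s)) * opnorm n (tm_eval (Mat n) \<rho>' t)
    \<le> tm_bound R s * (tm_lip R t * \<delta>) + tm_lip R s * \<delta> * tm_bound R t"
    using Mul.IH opnorm_tm_eval_le[of n \<rho> R s] opnorm_tm_eval_le[of n \<rho>' R t] bnd
    by (intro add_mono mult_mono) (auto intro: opnorm_nonneg tm_bound_nonneg tm_lip_nonneg mult_nonneg_nonneg)
  then show ?case
    using opnorm_mmul_diff_le by (simp add: algebra_simps) (meson order_trans)
next
  case (Scal c t)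
  have "opnorm n (msub (tm_eval (Mat n) \<rho> (Scal c t)) (tm_eval (Mat n) \<rho>' (Scal c t)))
      \<le> cmod c * opnorm n (msub (tm_eval (Mat n) \<rho> t) (tm_eval (Mat n) \<rho>' t))"
    using opnorm_mscl_diff_le[of n c _ c] by simp
  also have "\<dots> \<le> cmod c * (tm_lip R t * \<delta>)"
    using Scal.IH by (simp add: mult_left_mono)
  finally show ?case
    by (simp add: mult.assoc)
next
  case (Star t)
  then show ?case
    using opnorm_mstar_diff_le by simp (meson order_trans)
qed

lemma abs_cSUP_cINF_le:
  fixes f :: "'a \<Rightarrow> real"
  assumes "A \<noteq> {}" "\<And>a. a \<in> A \<Longrightarrow> \<bar>f a\<bar> \<le> M"
  shows "\<bar>SUP a\<in>A. f a\<bar> \<le> M" and "\<bar>INF a\<in>A. f a\<bar> \<le> M"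
proof -
  have lo: "- M \<le> f a" and hi: "f a \<le> M" if "a \<in> A" for a
    using assms(2)[OF that] by linarith+
  then have bdd: "bdd_above (f ` A)" "bdd_below (f ` A)"
    by (auto intro!: bdd_aboveI2[of _ _ M] bdd_belowI2[of _ "- M"])
  obtain a0 where "a0 \<in> A"
    using assms(1) by auto
  have "f a0 \<le> (SUP a\<in>A. f a)" "(INF a\<in>A. f a) \<le> f a0"
    using \<open>a0 \<in> A\<close> bdd by (auto intro: cSUP_upper cINF_lower)
  moreover have "(SUP a\<in>A. f a) \<le> M" "- M \<le> (INF a\<in>A. f a)"
    using assms(1) lo hi by (auto intro!: cSUP_least cINF_greatest)
  ultimately show "\<bar>SUP a\<in>A. f a\<bar> \<le> M" "\<bar>INF a\<in>A. f a\<bar> \<le> M"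
    using lo[OF \<open>a0 \<in> A\<close>] hi[OF \<open>a0 \<in> A\<close>] by linarith+
qed

lemma abs_cSUP_cINF_diff_le:
  fixes f :: "'a \<Rightarrow> real" and g :: "'b \<Rightarrow> real"
  assumes "A \<noteq> {}" "B \<noteq> {}" "\<And>a. a \<in> A \<Longrightarrow> \<bar>f a\<bar> \<le> M" "\<And>b. b \<in> B \<Longrightarrow> \<bar>g b\<bar> \<le> M"
    and fg: "\<And>a. a \<in> A \<Longrightarrow> \<exists>b\<in>B. \<bar>f a - g b\<bar> \<le> e"
    and gf: "\<And>b. b \<in> B \<Longrightarrow> \<exists>a\<in>A. \<bar>f a - g b\<bar> \<le> e"
  shows "\<bar>(SUP a\<in>A. f a) - (SUP b\<in>B. g b)\<bar> \<le> e" and "\<bar>(INF a\<in>A. f a) - (INF b\<in>B. g b)\<bar> \<le> e"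
proof -
  have "- M \<le> f a" "f a \<le> M" if "a \<in> A" for a
    using assms(3)[OF that] by linarith+
  moreover have "- M \<le> g b" "g b \<le> M" if "b \<in> B" for b
    using assms(4)[OF that] by linarith+
  ultimately have bdd: "bdd_above (f ` A)" "bdd_below (f ` A)" "bdd_above (g ` B)" "bdd_below (g ` B)"
    by (auto intro!: bdd_aboveI2[of _ _ M] bdd_belowI2[of _ "- M"])
  have "(SUP a\<in>A. f a) \<le> (SUP b\<in>B. g b) + e"
  proof (rule cSUP_least[OF assms(1)])
    fix a assume "a \<in> A"
    with fg obtain b where "b \<in> B" "\<bar>f a - g b\<bar> \<le> e" by blast
    then show "f a \<le> (SUP b\<in>B. g b) + e"
      using cSUP_upper[OF _ bdd(3), of b] by auto
  qed
  moreover have "(SUP b\<in>B. g b) \<le> (SUP a\<in>A. f a) + e"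
  proof (rule cSUP_least[OF assms(2)])
    fix b assume "b \<in> B"
    with gf obtain a where "a \<in> A" "\<bar>f a - g b\<bar> \<le> e" by blast
    then show "g b \<le> (SUP a\<in>A. f a) + e"
      using cSUP_upper[OF _ bdd(1), of a] by auto
  qed
  ultimately show "\<bar>(SUP a\<in>A. f a) - (SUP b\<in>B. g b)\<bar> \<le> e"
    by linarith
  have "(INF b\<in>B. g b) - e \<le> (INF a\<in>A. f a)"
  proof (rule cINF_greatest[OF assms(1)])
    fix a assume "a \<in> A"
    with fg obtain b where "b \<in> B" "\<bar>f a - g b\<bar> \<le> e" by blast
    then show "(INF b\<in>B. g b) - e \<le> f a"
      using cINF_lower[OF bdd(4), of b] by auto
  qed
  moreover have "(INF a\<in>A. f a) - e \<le> (INF b\<in>B. g b)"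
  proof (rule cINF_greatest[OF assms(2)])
    fix b assume "b \<in> B"
    with gf obtain a where "a \<in> A" "\<bar>f a - g b\<bar> \<le> e" by blast
    then show "(INF a\<in>A. f a) - e \<le> g b"
      using cINF_lower[OF bdd(2), of a] by auto
  qed
  ultimately show "\<bar>(INF a\<in>A. f a) - (INF b\<in>B. g b)\<bar> \<le> e"
    by linarith
qed

definition cube :: "real \<Rightarrow> (nat \<Rightarrow> real) set" where
  "cube B = {x. \<forall>i. \<bar>x i\<bar> \<le> B}"

lemma compact_cube: "compact (cube B)"
proof -
  have "compactin (product_topology (\<lambda>i. euclidean) UNIV) (PiE UNIV (\<lambda>i. {-B..B}))"
    by (simp add: compactin_PiE)
  moreover have "PiE UNIV (\<lambda>i. {-B..B}) = cube B"
    by (auto simp: cube_def PiE_def Pi_def abs_le_iff minus_le_iff)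
  ultimately show ?thesis
    by (metis euclidean_product_topology compactin_euclidean_iff)
qed

lemma dist_fun_le_sup:
  fixes x y :: "'a::countable \<Rightarrow> 'b::metric_space"
  assumes "\<And>i. dist (x i) (y i) \<le> h"
  shows "dist x y \<le> 2 * h"
proof -
  have "dist x y \<le> 2 * h + (1/2) ^ N" for N
  proof -
    have "{dist (x (from_nat k)) (y (from_nat k)) |k. k \<le> N}
        = (\<lambda>k. dist (x (from_nat k)) (y (from_nat k))) ` {..N}"
      by auto
    then have "Max {dist (x (from_nat k)) (y (from_nat k)) |k. k \<le> N} \<le> h"
      using assms by simp
    then show ?thesis
      using dist_fun_le_dist_first_terms[of x y N] by linarith
  qed
  moreover have "(\<lambda>N. 2 * h + (1/2::real) ^ N) \<longlonglongrightarrow> 2 * h"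
    using tendsto_add[OF tendsto_const[of "2 * h"] LIMSEQ_power_zero[of "1/2::real"]] by simp
  ultimately show ?thesis
    using tendsto_lowerbound[of "\<lambda>N. 2 * h + (1/2::real) ^ N" "2 * h" sequentially "dist x y"]
    by simp
qed

definition fm_args :: "(fm \<Rightarrow> real) \<Rightarrow> fm list \<Rightarrow> nat \<Rightarrow> real" where
  "fm_args v ps = (\<lambda>i. if i < length ps then v (ps ! i) else 0)"

lemma fm_eval_Conn: "fm_eval A \<rho> (Conn f ps) = f (fm_args (fm_eval A \<rho>) ps)"
  by (simp add: fm_args_def cong: if_cong)

lemma fm_args_in_cube:
  "(\<And>p. p \<in> set ps \<Longrightarrow> \<bar>v p\<bar> \<le> B) \<Longrightarrow> 0 \<le> B \<Longrightarrow> fm_args v ps \<in> cube B"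
  by (auto simp: fm_args_def cube_def)

lemma wf_ConnD:
  assumes "wf (Conn f ps)"
  shows "continuous_on UNIV f" and "\<And>p. p \<in> set ps \<Longrightarrow> wf p"
  using assms by (auto simp: list_all_iff)

definition fm_near :: "real \<Rightarrow> real \<Rightarrow> fm \<Rightarrow> fm \<Rightarrow> bool" where
  "fm_near R e \<phi> \<psi> \<longleftrightarrow> (\<forall>n \<rho>. env_ball n R \<rho> \<longrightarrow> \<bar>fm_eval (Mat n) \<rho> \<phi> - fm_eval (Mat n) \<rho> \<psi>\<bar> \<le> e)"

lemma fm_list_common_bound:
  assumes "\<And>p. p \<in> set ps \<Longrightarrow> \<exists>B. \<forall>n \<rho>. env_ball n R \<rho> \<longrightarrow> \<bar>fm_eval (Mat n) \<rho> p\<bar> \<le> B"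
  shows "\<exists>B\<ge>0. \<forall>p\<in>set ps. \<forall>n \<rho>. env_ball n R \<rho> \<longrightarrow> \<bar>fm_eval (Mat n) \<rho> p\<bar> \<le> B"
proof -
  have "\<forall>p\<in>set ps. \<exists>B. \<forall>n \<rho>. env_ball n R \<rho> \<longrightarrow> \<bar>fm_eval (Mat n) \<rho> p\<bar> \<le> B"
    using assms by blast
  from bchoice[OF this] obtain b
    where b: "\<forall>p\<in>set ps. \<forall>n \<rho>. env_ball n R \<rho> \<longrightarrow> \<bar>fm_eval (Mat n) \<rho> p\<bar> \<le> b p"
    by blast
  have "\<bar>fm_eval (Mat n) \<rho> p\<bar> \<le> (\<Sum>q\<in>set ps. \<bar>b q\<bar>)" if "p \<in> set ps" "env_ball n R \<rho>" for p n \<rho>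
  proof -
    have "\<bar>fm_eval (Mat n) \<rho> p\<bar> \<le> \<bar>b p\<bar>"
      using b that by fastforce
    also have "\<dots> \<le> (\<Sum>q\<in>set ps. \<bar>b q\<bar>)"
      using that(1) by (intro member_le_sum) auto
    finally show ?thesis .
  qed
  moreover have "0 \<le> (\<Sum>q\<in>set ps. \<bar>b q\<bar>)"
    by (intro sum_nonneg) auto
  ultimately show ?thesis
    by blast
qed

lemma fm_eval_Mat_trace_bounded:
  assumes "env_ball n R \<rho>"
  shows "\<bar>fm_eval (Mat n) \<rho> (ReTr t)\<bar> \<le> tm_bound R t" and "\<bar>fm_eval (Mat n) \<rho> (ImTr t)\<bar> \<le> tm_bound R t"
proof -
  have "cmod (mtr n (tm_eval (Mat n) \<rho> t)) \<le> tm_bound R t"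
    using assms by (meson env_ball_opnorm norm_mtr_le_opnorm opnorm_tm_eval_le order_trans)
  then show "\<bar>fm_eval (Mat n) \<rho> (ReTr t)\<bar> \<le> tm_bound R t" "\<bar>fm_eval (Mat n) \<rho> (ImTr t)\<bar> \<le> tm_bound R t"
    using abs_Re_le_cmod abs_Im_le_cmod by (auto intro: order_trans)
qed

lemma fm_eval_Mat_quantifier_bounded:
  assumes "0 < r" "R \<le> R'" "r \<le> R'"
    and bnd: "\<And>n \<rho>. env_ball n R' \<rho> \<Longrightarrow> \<bar>fm_eval (Mat n) \<rho> \<phi>\<bar> \<le> B"
    and "env_ball n R \<rho>"
  shows "\<bar>fm_eval (Mat n) \<rho> (SupF r j \<phi>)\<bar> \<le> B" and "\<bar>fm_eval (Mat n) \<rho> (InfF r j \<phi>)\<bar> \<le> B"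
proof -
  have ne: "ball_r (Mat n) r \<noteq> {}"
    using zero_in_ball_r_Mat[of r n] \<open>0 < r\<close> by auto
  have "\<bar>fm_eval (Mat n) (\<rho>(j := z)) \<phi>\<bar> \<le> B" if "z \<in> ball_r (Mat n) r" for z
    using bnd env_ball_upd[OF \<open>env_ball n R \<rho>\<close> that \<open>R \<le> R'\<close> \<open>r \<le> R'\<close>] by blast
  note le = abs_cSUP_cINF_le[OF ne this]
  show "\<bar>fm_eval (Mat n) \<rho> (SupF r j \<phi>)\<bar> \<le> B" "\<bar>fm_eval (Mat n) \<rho> (InfF r j \<phi>)\<bar> \<le> B"
    using le by simp_all
qed

lemma fm_eval_Mat_bounded:
  assumes "wf \<phi>"
  shows "\<exists>B. \<forall>n \<rho>. env_ball n R \<rho> \<longrightarrow> \<bar>fm_eval (Mat n) \<rho> \<phi>\<bar> \<le> B"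
  using assms
proof (induction \<phi> arbitrary: R)
  case (ReTr t)
  then show ?case using fm_eval_Mat_trace_bounded by blast
next
  case (ImTr t)
  then show ?case using fm_eval_Mat_trace_bounded by blast
next
  case (Conn f ps)
  have "\<exists>B\<ge>0. \<forall>p\<in>set ps. \<forall>n \<rho>. env_ball n R \<rho> \<longrightarrow> \<bar>fm_eval (Mat n) \<rho> p\<bar> \<le> B"
    using Conn.IH wf_ConnD(2)[OF Conn.prems] by (intro fm_list_common_bound) blast
  then obtain B where "0 \<le> B" and B: "\<And>p n \<rho>. p \<in> set ps \<Longrightarrow> env_ball n R \<rho> \<Longrightarrow> \<bar>fm_eval (Mat n) \<rho> p\<bar> \<le> B"
    by blast
  have "compact (f ` cube B)"
    using wf_ConnD(1)[OF Conn.prems]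
    by (intro compact_continuous_image compact_cube) (auto intro: continuous_on_subset)
  then have "bounded (f ` cube B)"
    by (rule compact_imp_bounded)
  then obtain M where "\<forall>y\<in>f ` cube B. \<bar>y\<bar> \<le> M"
    unfolding bounded_real by blast
  moreover have "fm_args (fm_eval (Mat n) \<rho>) ps \<in> cube B" if "env_ball n R \<rho>" for n \<rho>
    using B that \<open>0 \<le> B\<close> by (auto intro!: fm_args_in_cube)
  ultimately have "\<bar>fm_eval (Mat n) \<rho> (Conn f ps)\<bar> \<le> M" if "env_ball n R \<rho>" for n \<rho>
    using that unfolding fm_eval_Conn by blast
  then show ?case
    by blast
next
  case (SupF r j \<phi>)
  then have "0 < r" "wf \<phi>"
    by auto
  then obtain B where B: "\<And>n \<rho>. env_ball n (max R r) \<rho> \<Longrightarrow> \<bar>fm_eval (Mat n) \<rho> \<phi>\<bar> \<le> B"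
    using SupF.IH by blast
  have "\<bar>fm_eval (Mat n) \<rho> (SupF r j \<phi>)\<bar> \<le> B" if "env_ball n R \<rho>" for n \<rho>
    using fm_eval_Mat_quantifier_bounded(1)[OF \<open>0 < r\<close> max.cobounded1 max.cobounded2 B that] by simp
  then show ?case
    by blast
next
  case (InfF r j \<phi>)
  then have "0 < r" "wf \<phi>"
    by auto
  then obtain B where B: "\<And>n \<rho>. env_ball n (max R r) \<rho> \<Longrightarrow> \<bar>fm_eval (Mat n) \<rho> \<phi>\<bar> \<le> B"
    using InfF.IH by blast
  have "\<bar>fm_eval (Mat n) \<rho> (InfF r j \<phi>)\<bar> \<le> B" if "env_ball n R \<rho>" for n \<rho>
    using fm_eval_Mat_quantifier_bounded(2)[OF \<open>0 < r\<close> max.cobounded1 max.cobounded2 B that] by simp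
  then show ?case
    by blast
qed

lemma fm_eval_Mat_trace_uniformly_continuous:
  assumes "0 < e"
  shows "\<exists>\<delta>>0. \<forall>n \<rho> \<rho>'. env_ball n R \<rho> \<longrightarrow> env_ball n R \<rho>' \<longrightarrow> env_close n \<delta> \<rho> \<rho>' \<longrightarrow>
    \<bar>fm_eval (Mat n) \<rho> (ReTr t) - fm_eval (Mat n) \<rho>' (ReTr t)\<bar> \<le> e \<and>
    \<bar>fm_eval (Mat n) \<rho> (ImTr t) - fm_eval (Mat n) \<rho>' (ImTr t)\<bar> \<le> e"
proof (intro exI conjI allI impI)
  define \<delta> where "\<delta> = e / (tm_lip R t + 1)"
  show "0 < \<delta>"
    using assms tm_lip_nonneg[of R t] by (simp add: \<delta>_def)
  fix n \<rho> \<rho>'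
  assume "env_ball n R \<rho>" "env_ball n R \<rho>'" "env_close n \<delta> \<rho> \<rho>'"
  then have "cmod (mtr n (tm_eval (Mat n) \<rho> t) - mtr n (tm_eval (Mat n) \<rho>' t)) \<le> tm_lip R t * \<delta>"
    by (meson env_ball_opnorm norm_mtr_diff_le_opnorm opnorm_tm_eval_diff_le order_trans)
  also have "tm_lip R t * \<delta> \<le> e"
    using assms tm_lip_nonneg[of R t] by (simp add: \<delta>_def field_simps)
  finally have le: "cmod (mtr n (tm_eval (Mat n) \<rho> t) - mtr n (tm_eval (Mat n) \<rho>' t)) \<le> e" .
  show "\<bar>fm_eval (Mat n) \<rho> (ReTr t) - fm_eval (Mat n) \<rho>' (ReTr t)\<bar> \<le> e"
    using abs_Re_le_cmod[of "mtr n (tm_eval (Mat n) \<rho> t) - mtr n (tm_eval (Mat n) \<rho>' t)"] le by simp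
  show "\<bar>fm_eval (Mat n) \<rho> (ImTr t) - fm_eval (Mat n) \<rho>' (ImTr t)\<bar> \<le> e"
    using abs_Im_le_cmod[of "mtr n (tm_eval (Mat n) \<rho> t) - mtr n (tm_eval (Mat n) \<rho>' t)"] le by simp
qed

lemma fm_eval_Mat_quantifier_close:
  assumes "0 < r" "R \<le> R'" "r \<le> R'"
    and close: "\<And>n \<rho> \<rho>'. env_ball n R' \<rho> \<Longrightarrow> env_ball n R' \<rho>' \<Longrightarrow> env_close n \<delta> \<rho> \<rho>' \<Longrightarrow>
       \<bar>fm_eval (Mat n) \<rho> \<phi> - fm_eval (Mat n) \<rho>' \<phi>\<bar> \<le> e"
    and bnd: "\<And>n \<rho>. env_ball n R' \<rho> \<Longrightarrow> \<bar>fm_eval (Mat n) \<rho> \<phi>\<bar> \<le> B"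
    and \<rho>: "env_ball n R \<rho>" "env_ball n R \<rho>'" "env_close n \<delta> \<rho> \<rho>'"
  shows "\<bar>fm_eval (Mat n) \<rho> (SupF r j \<phi>) - fm_eval (Mat n) \<rho>' (SupF r j \<phi>)\<bar> \<le> e"
    and "\<bar>fm_eval (Mat n) \<rho> (InfF r j \<phi>) - fm_eval (Mat n) \<rho>' (InfF r j \<phi>)\<bar> \<le> e"
proof -
  have upd: "env_ball n R' (\<rho>(j := z))" "env_ball n R' (\<rho>'(j := z))" if "z \<in> ball_r (Mat n) r" for z
    using env_ball_upd[OF _ that \<open>R \<le> R'\<close> \<open>r \<le> R'\<close>] \<rho> by auto
  have "env_close n \<delta> (\<rho>(j := z)) (\<rho>'(j := z))" for z
    using env_close_upd[OF \<rho>(3)] env_close_nonneg[OF \<rho>(3)] by simp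
  then have "\<bar>fm_eval (Mat n) (\<rho>(j := z)) \<phi> - fm_eval (Mat n) (\<rho>'(j := z)) \<phi>\<bar> \<le> e"
    if "z \<in> ball_r (Mat n) r" for z
    using close upd[OF that] by blast
  then have match: "\<exists>z'\<in>ball_r (Mat n) r. \<bar>fm_eval (Mat n) (\<rho>(j := z)) \<phi> - fm_eval (Mat n) (\<rho>'(j := z')) \<phi>\<bar> \<le> e"
    "\<exists>z'\<in>ball_r (Mat n) r. \<bar>fm_eval (Mat n) (\<rho>(j := z')) \<phi> - fm_eval (Mat n) (\<rho>'(j := z)) \<phi>\<bar> \<le> e"
    if "z \<in> ball_r (Mat n) r" for z
    using that by blast+
  have ne: "ball_r (Mat n) r \<noteq> {}"
    using zero_in_ball_r_Mat[of r n] \<open>0 < r\<close> by auto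
  have "\<bar>fm_eval (Mat n) (\<rho>(j := z)) \<phi>\<bar> \<le> B" "\<bar>fm_eval (Mat n) (\<rho>'(j := z)) \<phi>\<bar> \<le> B"
    if "z \<in> ball_r (Mat n) r" for z
    using bnd upd[OF that] by blast+
  note le = abs_cSUP_cINF_diff_le[OF ne ne this match]
  show "\<bar>fm_eval (Mat n) \<rho> (SupF r j \<phi>) - fm_eval (Mat n) \<rho>' (SupF r j \<phi>)\<bar> \<le> e"
    "\<bar>fm_eval (Mat n) \<rho> (InfF r j \<phi>) - fm_eval (Mat n) \<rho>' (InfF r j \<phi>)\<bar> \<le> e"
    using le by simp_all
qed

lemma fm_list_common_modulus:
  assumes "\<And>p. p \<in> set ps \<Longrightarrow> \<exists>\<delta>>0. \<forall>n \<rho> \<rho>'. env_ball n R \<rho> \<longrightarrow> env_ball n R \<rho>' \<longrightarrow>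
      env_close n \<delta> \<rho> \<rho>' \<longrightarrow> \<bar>fm_eval (Mat n) \<rho> p - fm_eval (Mat n) \<rho>' p\<bar> \<le> e"
  shows "\<exists>\<delta>>0. \<forall>p\<in>set ps. \<forall>n \<rho> \<rho>'. env_ball n R \<rho> \<longrightarrow> env_ball n R \<rho>' \<longrightarrow>
      env_close n \<delta> \<rho> \<rho>' \<longrightarrow> \<bar>fm_eval (Mat n) \<rho> p - fm_eval (Mat n) \<rho>' p\<bar> \<le> e"
proof -
  have "\<forall>p\<in>set ps. \<exists>\<delta>>0. \<forall>n \<rho> \<rho>'. env_ball n R \<rho> \<longrightarrow> env_ball n R \<rho>' \<longrightarrow>
      env_close n \<delta> \<rho> \<rho>' \<longrightarrow> \<bar>fm_eval (Mat n) \<rho> p - fm_eval (Mat n) \<rho>' p\<bar> \<le> e"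
    using assms by blast
  from bchoice[OF this] obtain d where d: "\<And>p. p \<in> set ps \<Longrightarrow> 0 < d p"
    and d_close: "\<And>p n \<rho> \<rho>'. p \<in> set ps \<Longrightarrow> env_ball n R \<rho> \<Longrightarrow> env_ball n R \<rho>' \<Longrightarrow>
      env_close n (d p) \<rho> \<rho>' \<Longrightarrow> \<bar>fm_eval (Mat n) \<rho> p - fm_eval (Mat n) \<rho>' p\<bar> \<le> e"
    by blast
  define \<delta> where "\<delta> = Min (insert 1 (d ` set ps))"
  have "0 < \<delta>"
    using d by (simp add: \<delta>_def)
  moreover have "\<bar>fm_eval (Mat n) \<rho> p - fm_eval (Mat n) \<rho>' p\<bar> \<le> e"
    if "p \<in> set ps" "env_ball n R \<rho>" "env_ball n R \<rho>'" "env_close n \<delta> \<rho> \<rho>'" for p n \<rho> \<rho>'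
    using d_close[OF that(1-3) env_close_mono[OF that(4)]] that(1) by (simp add: \<delta>_def)
  ultimately show ?thesis
    by blast
qed

lemma fm_eval_Mat_Conn_uniformly_continuous:
  assumes wf: "wf (Conn f ps)" and "0 < e"
    and IH: "\<And>p R e. p \<in> set ps \<Longrightarrow> 0 < e \<Longrightarrow> \<exists>\<delta>>0. \<forall>n \<rho> \<rho>'. env_ball n R \<rho> \<longrightarrow>
      env_ball n R \<rho>' \<longrightarrow> env_close n \<delta> \<rho> \<rho>' \<longrightarrow> \<bar>fm_eval (Mat n) \<rho> p - fm_eval (Mat n) \<rho>' p\<bar> \<le> e"
  shows "\<exists>\<delta>>0. \<forall>n \<rho> \<rho>'. env_ball n R \<rho> \<longrightarrow> env_ball n R \<rho>' \<longrightarrow> env_close n \<delta> \<rho> \<rho>' \<longrightarrow>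
           \<bar>fm_eval (Mat n) \<rho> (Conn f ps) - fm_eval (Mat n) \<rho>' (Conn f ps)\<bar> \<le> e"
proof -
  have "\<exists>B\<ge>0. \<forall>p\<in>set ps. \<forall>n \<rho>. env_ball n R \<rho> \<longrightarrow> \<bar>fm_eval (Mat n) \<rho> p\<bar> \<le> B"
    using fm_eval_Mat_bounded wf_ConnD(2)[OF wf] by (intro fm_list_common_bound) blast
  then obtain B where "0 \<le> B" and B: "\<And>p n \<rho>. p \<in> set ps \<Longrightarrow> env_ball n R \<rho> \<Longrightarrow> \<bar>fm_eval (Mat n) \<rho> p\<bar> \<le> B"
    by blast
  have "uniformly_continuous_on (cube B) f"
    using wf_ConnD(1)[OF wf]
    by (intro compact_uniformly_continuous compact_cube) (auto intro: continuous_on_subset)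
  then obtain \<eta> where "0 < \<eta>"
    and \<eta>: "\<And>x x'. x \<in> cube B \<Longrightarrow> x' \<in> cube B \<Longrightarrow> dist x' x < \<eta> \<Longrightarrow> \<bar>f x' - f x\<bar> < e"
    using \<open>0 < e\<close> unfolding uniformly_continuous_on_def dist_real_def by blast
  have "\<exists>\<delta>>0. \<forall>p\<in>set ps. \<forall>n \<rho> \<rho>'. env_ball n R \<rho> \<longrightarrow> env_ball n R \<rho>' \<longrightarrow>
      env_close n \<delta> \<rho> \<rho>' \<longrightarrow> \<bar>fm_eval (Mat n) \<rho> p - fm_eval (Mat n) \<rho>' p\<bar> \<le> \<eta> / 3"
  proof (rule fm_list_common_modulus)
    fix p assume "p \<in> set ps"
    then show "\<exists>\<delta>>0. \<forall>n \<rho> \<rho>'. env_ball n R \<rho> \<longrightarrow> env_ball n R \<rho>' \<longrightarrow>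
      env_close n \<delta> \<rho> \<rho>' \<longrightarrow> \<bar>fm_eval (Mat n) \<rho> p - fm_eval (Mat n) \<rho>' p\<bar> \<le> \<eta> / 3"
      using IH[where R=R and e="\<eta> / 3"] \<open>0 < \<eta>\<close> by simp
  qed
  then obtain \<delta> where "0 < \<delta>" and \<delta>: "\<And>p n \<rho> \<rho>'. p \<in> set ps \<Longrightarrow> env_ball n R \<rho> \<Longrightarrow>
      env_ball n R \<rho>' \<Longrightarrow> env_close n \<delta> \<rho> \<rho>' \<Longrightarrow> \<bar>fm_eval (Mat n) \<rho> p - fm_eval (Mat n) \<rho>' p\<bar> \<le> \<eta> / 3"
    by blast
  have "\<bar>fm_eval (Mat n) \<rho> (Conn f ps) - fm_eval (Mat n) \<rho>' (Conn f ps)\<bar> \<le> e"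
    if "env_ball n R \<rho>" "env_ball n R \<rho>'" "env_close n \<delta> \<rho> \<rho>'" for n \<rho> \<rho>'
  proof -
    let ?a = "fm_args (fm_eval (Mat n) \<rho>) ps" and ?a' = "fm_args (fm_eval (Mat n) \<rho>') ps"
    have "dist (?a i) (?a' i) \<le> \<eta> / 3" for i
    proof (cases "i < length ps")
      case True
      then show ?thesis
        using \<delta>[OF nth_mem[OF True] that] by (simp add: fm_args_def dist_real_def)
    qed (use \<open>0 < \<eta>\<close> in \<open>simp add: fm_args_def\<close>)
    then have "dist ?a' ?a < \<eta>"
      using dist_fun_le_sup[of ?a ?a' "\<eta> / 3"] \<open>0 < \<eta>\<close> by (simp add: dist_commute)
    moreover have "?a \<in> cube B" "?a' \<in> cube B"
      using B that \<open>0 \<le> B\<close> by (auto intro!: fm_args_in_cube)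
    ultimately have "\<bar>f ?a' - f ?a\<bar> < e"
      by (rule \<eta>[rotated 2])
    then show ?thesis
      unfolding fm_eval_Conn by linarith
  qed
  with \<open>0 < \<delta>\<close> show ?thesis
    by blast
qed

lemma fm_eval_Mat_uniformly_continuous:
  assumes "wf \<phi>" "0 < e"
  shows "\<exists>\<delta>>0. \<forall>n \<rho> \<rho>'. env_ball n R \<rho> \<longrightarrow> env_ball n R \<rho>' \<longrightarrow> env_close n \<delta> \<rho> \<rho>' \<longrightarrow>
           \<bar>fm_eval (Mat n) \<rho> \<phi> - fm_eval (Mat n) \<rho>' \<phi>\<bar> \<le> e"
  using assms
proof (induction \<phi> arbitrary: R e)
  case (ReTr t)
  obtain \<delta> where "0 < \<delta>" and "\<forall>n \<rho> \<rho>'. env_ball n R \<rho> \<longrightarrow> env_ball n R \<rho>' \<longrightarrow> env_close n \<delta> \<rho> \<rho>' \<longrightarrow>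
      \<bar>fm_eval (Mat n) \<rho> (ReTr t) - fm_eval (Mat n) \<rho>' (ReTr t)\<bar> \<le> e \<and>
      \<bar>fm_eval (Mat n) \<rho> (ImTr t) - fm_eval (Mat n) \<rho>' (ImTr t)\<bar> \<le> e"
    using fm_eval_Mat_trace_uniformly_continuous[OF ReTr.prems(2)] by blast
  then show ?case
    by (intro exI[of _ \<delta>]) auto
next
  case (ImTr t)
  obtain \<delta> where "0 < \<delta>" and "\<forall>n \<rho> \<rho>'. env_ball n R \<rho> \<longrightarrow> env_ball n R \<rho>' \<longrightarrow> env_close n \<delta> \<rho> \<rho>' \<longrightarrow>
      \<bar>fm_eval (Mat n) \<rho> (ReTr t) - fm_eval (Mat n) \<rho>' (ReTr t)\<bar> \<le> e \<and>
      \<bar>fm_eval (Mat n) \<rho> (ImTr t) - fm_eval (Mat n) \<rho>' (ImTr t)\<bar> \<le> e"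
    using fm_eval_Mat_trace_uniformly_continuous[OF ImTr.prems(2)] by blast
  then show ?case
    by (intro exI[of _ \<delta>]) auto
next
  case (Conn f ps)
  show ?case
    by (rule fm_eval_Mat_Conn_uniformly_continuous[OF Conn.prems])
      (use Conn.IH wf_ConnD(2)[OF Conn.prems(1)] in blast)
next
  case (SupF r j \<phi>)
  then have "0 < r" "wf \<phi>"
    by auto
  then obtain \<delta> where "0 < \<delta>" and \<delta>: "\<And>n \<rho> \<rho>'. env_ball n (max R r) \<rho> \<Longrightarrow> env_ball n (max R r) \<rho>' \<Longrightarrow>
      env_close n \<delta> \<rho> \<rho>' \<Longrightarrow> \<bar>fm_eval (Mat n) \<rho> \<phi> - fm_eval (Mat n) \<rho>' \<phi>\<bar> \<le> e"
    using SupF.IH SupF.prems(2) by blast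
  obtain B where B: "\<And>n \<rho>. env_ball n (max R r) \<rho> \<Longrightarrow> \<bar>fm_eval (Mat n) \<rho> \<phi>\<bar> \<le> B"
    using fm_eval_Mat_bounded \<open>wf \<phi>\<close> by blast
  have "\<bar>fm_eval (Mat n) \<rho> (SupF r j \<phi>) - fm_eval (Mat n) \<rho>' (SupF r j \<phi>)\<bar> \<le> e"
    if "env_ball n R \<rho>" "env_ball n R \<rho>'" "env_close n \<delta> \<rho> \<rho>'" for n \<rho> \<rho>'
    using fm_eval_Mat_quantifier_close(1)[OF \<open>0 < r\<close> max.cobounded1 max.cobounded2 \<delta> B that] by simp
  then show ?case
    using \<open>0 < \<delta>\<close> by blast
next
  case (InfF r j \<phi>)
  then have "0 < r" "wf \<phi>"
    by auto
  then obtain \<delta> where "0 < \<delta>" and \<delta>: "\<And>n \<rho> \<rho>'. env_ball n (max R r) \<rho> \<Longrightarrow> env_ball n (max R r) \<rho>' \<Longrightarrow>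
      env_close n \<delta> \<rho> \<rho>' \<Longrightarrow> \<bar>fm_eval (Mat n) \<rho> \<phi> - fm_eval (Mat n) \<rho>' \<phi>\<bar> \<le> e"
    using InfF.IH InfF.prems(2) by blast
  obtain B where B: "\<And>n \<rho>. env_ball n (max R r) \<rho> \<Longrightarrow> \<bar>fm_eval (Mat n) \<rho> \<phi>\<bar> \<le> B"
    using fm_eval_Mat_bounded \<open>wf \<phi>\<close> by blast
  have "\<bar>fm_eval (Mat n) \<rho> (InfF r j \<phi>) - fm_eval (Mat n) \<rho>' (InfF r j \<phi>)\<bar> \<le> e"
    if "env_ball n R \<rho>" "env_ball n R \<rho>'" "env_close n \<delta> \<rho> \<rho>'" for n \<rho> \<rho>'
    using fm_eval_Mat_quantifier_close(2)[OF \<open>0 < r\<close> max.cobounded1 max.cobounded2 \<delta> B that] by simp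
  then show ?case
    using \<open>0 < \<delta>\<close> by blast
qed

section \<open>A countable dense family of formulas\<close>

datatype rtm = RVar nat | ROne | RAdd rtm rtm | RMul rtm rtm | RScal rat rat rtm | RStar rtm

primrec tm_of_rtm :: "rtm \<Rightarrow> tm" where
  "tm_of_rtm (RVar i) = Var i"
| "tm_of_rtm ROne = One"
| "tm_of_rtm (RAdd s t) = Add (tm_of_rtm s) (tm_of_rtm t)"
| "tm_of_rtm (RMul s t) = Mul (tm_of_rtm s) (tm_of_rtm t)"
| "tm_of_rtm (RScal p q t) = Scal (Complex (of_rat p) (of_rat q)) (tm_of_rtm t)"
| "tm_of_rtm (RStar t) = Star (tm_of_rtm t)"

primrec tm_rat_err :: "real \<Rightarrow> tm \<Rightarrow> real" where
  "tm_rat_err R (Var i) = 0"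
| "tm_rat_err R One = 0"
| "tm_rat_err R (Add s t) = tm_rat_err R s + tm_rat_err R t"
| "tm_rat_err R (Mul s t) =
     tm_bound R s * tm_rat_err R t + tm_rat_err R s * (tm_bound R t + tm_rat_err R t)"
| "tm_rat_err R (Scal c t) = cmod c * tm_rat_err R t + 2 * (tm_bound R t + tm_rat_err R t)"
| "tm_rat_err R (Star t) = tm_rat_err R t"

lemma tm_rat_err_nonneg: "0 \<le> tm_rat_err R t"
  by (induction t) (auto simp: tm_bound_nonneg)

lemma exists_rat_near:
  fixes r e :: real
  assumes "0 < e"
  shows "\<exists>q::rat. \<bar>r - of_rat q\<bar> \<le> e"
proof -
  obtain x where "x \<in> \<rat>" "r < x" "x < r + e"
    using Rats_dense_in_real[of r "r + e"] assms by auto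
  then show ?thesis
    by (metis Rats_cases abs_of_nonneg abs_minus_commute diff_ge_0_iff_ge less_eq_real_def
        add.commute diff_less_eq)
qed

definition tm_rat_near :: "real \<Rightarrow> real \<Rightarrow> tm \<Rightarrow> rtm \<Rightarrow> bool" where
  "tm_rat_near R e t t' \<longleftrightarrow> tm_vars (tm_of_rtm t') = tm_vars t \<and>
     (\<forall>n \<rho>. (\<forall>j. opnorm n (\<rho> j) \<le> R) \<longrightarrow>
        opnorm n (msub (tm_eval (Mat n) \<rho> t) (tm_eval (Mat n) \<rho> (tm_of_rtm t'))) \<le> e)"

lemma opnorm_approx_bound:
  assumes "opnorm n x \<le> A" "opnorm n (msub x x') \<le> a"
  shows "opnorm n x' \<le> A + a"
  using opnorm_triangle_msub[of n x' x] opnorm_msub_commute[of n x' x] assms by linarith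

lemma exists_tm_rat_near:
  assumes "0 < h" "h \<le> 1"
  shows "\<exists>t'. tm_rat_near R (tm_rat_err R t * h) t t'"
proof (induction t)
  case (Var i)
  show ?case
    by (rule exI[of _ "RVar i"]) (simp add: tm_rat_near_def)
next
  case One
  show ?case
    by (rule exI[of _ ROne]) (simp add: tm_rat_near_def)
next
  case (Add s t)
  then obtain s' t' where "tm_rat_near R (tm_rat_err R s * h) s s'" "tm_rat_near R (tm_rat_err R t * h) t t'"
    by blast
  then show ?case
    by (intro exI[of _ "RAdd s' t'"])
      (auto simp: tm_rat_near_def distrib_right intro: order_trans[OF opnorm_madd_diff_le add_mono])
next
  case (Mul s t)
  then obtain s' t' where s': "tm_rat_near R (tm_rat_err R s * h) s s'"
    and t': "tm_rat_near R (tm_rat_err R t * h) t t'"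
    by blast
  have "opnorm n (msub (tm_eval (Mat n) \<rho> (Mul s t)) (tm_eval (Mat n) \<rho> (tm_of_rtm (RMul s' t'))))
      \<le> tm_rat_err R (Mul s t) * h" if bnd: "\<forall>j. opnorm n (\<rho> j) \<le> R" for n \<rho>
  proof -
    let ?x = "tm_eval (Mat n) \<rho> s" and ?y = "tm_eval (Mat n) \<rho> t"
      and ?x' = "tm_eval (Mat n) \<rho> (tm_of_rtm s')" and ?y' = "tm_eval (Mat n) \<rho> (tm_of_rtm t')"
    have dx: "opnorm n (msub ?x ?x') \<le> tm_rat_err R s * h" and dy: "opnorm n (msub ?y ?y') \<le> tm_rat_err R t * h"
      using s' t' bnd by (auto simp: tm_rat_near_def)
    have x: "opnorm n ?x \<le> tm_bound R s" and y: "opnorm n ?y \<le> tm_bound R t"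
      using bnd by (auto intro: opnorm_tm_eval_le)
    have "tm_rat_err R t * h \<le> tm_rat_err R t"
      using assms tm_rat_err_nonneg[of R t] by (simp add: mult_left_le)
    then have "opnorm n ?y' \<le> tm_bound R t + tm_rat_err R t"
      using opnorm_approx_bound[OF y dy] by linarith
    then have "opnorm n ?x * opnorm n (msub ?y ?y') + opnorm n (msub ?x ?x') * opnorm n ?y'
        \<le> tm_bound R s * (tm_rat_err R t * h) + tm_rat_err R s * h * (tm_bound R t + tm_rat_err R t)"
      using x dx dy assms
      by (intro add_mono mult_mono)
        (auto intro: opnorm_nonneg tm_bound_nonneg tm_rat_err_nonneg mult_nonneg_nonneg)
    then show ?thesis
      using opnorm_mmul_diff_le[of n ?x ?y ?x' ?y'] by (simp add: algebra_simps)
  qed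
  then show ?case
    using s' t' by (intro exI[of _ "RMul s' t'"]) (simp add: tm_rat_near_def)
next
  case (Scal c t)
  then obtain t' where t': "tm_rat_near R (tm_rat_err R t * h) t t'"
    by blast
  obtain p q where p: "\<bar>Re c - of_rat p\<bar> \<le> h" and q: "\<bar>Im c - of_rat q\<bar> \<le> h"
    using exists_rat_near[OF assms(1)] by meson
  define c' where "c' = Complex (of_rat p) (of_rat q)"
  have c': "cmod (c - c') \<le> 2 * h"
    using cmod_le[of "c - c'"] p q by (simp add: c'_def)
  have "opnorm n (msub (tm_eval (Mat n) \<rho> (Scal c t)) (tm_eval (Mat n) \<rho> (tm_of_rtm (RScal p q t'))))
      \<le> tm_rat_err R (Scal c t) * h" if bnd: "\<forall>j. opnorm n (\<rho> j) \<le> R" for n \<rho>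
  proof -
    let ?x = "tm_eval (Mat n) \<rho> t" and ?x' = "tm_eval (Mat n) \<rho> (tm_of_rtm t')"
    have dx: "opnorm n (msub ?x ?x') \<le> tm_rat_err R t * h"
      using t' bnd by (auto simp: tm_rat_near_def)
    have "tm_rat_err R t * h \<le> tm_rat_err R t"
      using assms tm_rat_err_nonneg[of R t] by (simp add: mult_left_le)
    then have "opnorm n ?x' \<le> tm_bound R t + tm_rat_err R t"
      using opnorm_approx_bound[OF opnorm_tm_eval_le dx] bnd by fastforce
    then have "cmod c * opnorm n (msub ?x ?x') + cmod (c - c') * opnorm n ?x'
        \<le> cmod c * (tm_rat_err R t * h) + 2 * h * (tm_bound R t + tm_rat_err R t)"
      using dx c' assms by (intro add_mono mult_mono mult_left_mono) (auto intro: opnorm_nonneg)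
    then show ?thesis
      using opnorm_mscl_diff_le[of n c ?x c' ?x'] by (simp add: c'_def algebra_simps)
  qed
  then show ?case
    using t' by (intro exI[of _ "RScal p q t'"]) (simp add: tm_rat_near_def)
next
  case (Star t)
  then obtain t' where "tm_rat_near R (tm_rat_err R t * h) t t'"
    by blast
  then show ?case
    by (intro exI[of _ "RStar t'"]) (auto simp: tm_rat_near_def intro: order_trans[OF opnorm_mstar_diff_le])
qed

lemma tm_trace_rat_approx:
  assumes "0 < e"
  shows "\<exists>t'. tm_vars (tm_of_rtm t') = tm_vars t \<and>
    (\<forall>n \<rho>. (\<forall>j. opnorm n (\<rho> j) \<le> R) \<longrightarrow>
       cmod (mtr n (tm_eval (Mat n) \<rho> t) - mtr n (tm_eval (Mat n) \<rho> (tm_of_rtm t'))) \<le> e)"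
proof -
  define h where "h = min 1 (e / (tm_rat_err R t + 1))"
  have h: "0 < h" "h \<le> 1" "tm_rat_err R t * h \<le> e"
    using assms tm_rat_err_nonneg[of R t]
    by (auto simp: h_def min_def field_simps mult_left_mono intro: order_trans[of _ "tm_rat_err R t * 1"])
  then obtain t' where "tm_rat_near R (tm_rat_err R t * h) t t'"
    using exists_tm_rat_near by blast
  then show ?thesis
    using h(3) unfolding tm_rat_near_def
    by (intro exI[of _ t']) (meson norm_mtr_diff_le_opnorm order_trans)
qed

datatype rpoly = PVar nat | PConst rat | PAdd rpoly rpoly | PMul rpoly rpoly

primrec rpoly_eval :: "rpoly \<Rightarrow> (nat \<Rightarrow> real) \<Rightarrow> real" where
  "rpoly_eval (PVar i) x = x i"
| "rpoly_eval (PConst c) x = of_rat c"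
| "rpoly_eval (PAdd p q) x = rpoly_eval p x + rpoly_eval q x"
| "rpoly_eval (PMul p q) x = rpoly_eval p x * rpoly_eval q x"

lemma continuous_on_rpoly_eval_restrict:
  "continuous_on S (\<lambda>x. rpoly_eval p (\<lambda>i. if i < k then x i else 0))"
proof (induction p)
  case (PVar i)
  then show ?case
    by (cases "i < k") (auto intro: continuous_on_subset[OF continuous_on_product_coordinates])
qed (auto intro: continuous_intros)

definition rpoly_approximable :: "(nat \<Rightarrow> real) set \<Rightarrow> ((nat \<Rightarrow> real) \<Rightarrow> real) \<Rightarrow> bool" where
  "rpoly_approximable K h \<longleftrightarrow>
     continuous_on K h \<and> (\<forall>e>0. \<exists>p. \<forall>x\<in>K. \<bar>h x - rpoly_eval p x\<bar> \<le> e)"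

lemma rpoly_approximable_const: "rpoly_approximable K (\<lambda>x. c)"
proof -
  have "\<exists>p. \<forall>x\<in>K. \<bar>c - rpoly_eval p x\<bar> \<le> e" if "0 < e" for e
    using exists_rat_near[OF that, of c] by (metis rpoly_eval.simps(2))
  then show ?thesis
    by (simp add: rpoly_approximable_def)
qed

lemma rpoly_approximable_coord: "rpoly_approximable K (\<lambda>x. x i)"
  unfolding rpoly_approximable_def
  by (auto intro!: exI[of _ "PVar i"] continuous_on_subset[OF continuous_on_product_coordinates])

lemma rpoly_approximable_add:
  assumes "rpoly_approximable K f" "rpoly_approximable K g"
  shows "rpoly_approximable K (\<lambda>x. f x + g x)"
proof -
  have "\<exists>p. \<forall>x\<in>K. \<bar>f x + g x - rpoly_eval p x\<bar> \<le> e" if "0 < e" for e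
  proof -
    obtain p q where p: "\<forall>x\<in>K. \<bar>f x - rpoly_eval p x\<bar> \<le> e / 2"
      and q: "\<forall>x\<in>K. \<bar>g x - rpoly_eval q x\<bar> \<le> e / 2"
      using assms \<open>0 < e\<close> unfolding rpoly_approximable_def by (meson half_gt_zero)
    have "\<bar>f x + g x - rpoly_eval (PAdd p q) x\<bar> \<le> e" if "x \<in> K" for x
      using p[rule_format, OF that] q[rule_format, OF that] unfolding rpoly_eval.simps by linarith
    then show ?thesis
      by blast
  qed
  then show ?thesis
    using assms by (simp add: rpoly_approximable_def continuous_on_add)
qed

lemma abs_mult_diff_le:
  fixes a b a' b' h :: real
  assumes "\<bar>a\<bar> \<le> A" "\<bar>b\<bar> \<le> B" "\<bar>a - a'\<bar> \<le> h" "\<bar>b - b'\<bar> \<le> h" "0 \<le> h" "h \<le> 1"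
  shows "\<bar>a * b - a' * b'\<bar> \<le> h * (A + B + 1)"
proof -
  have "\<bar>a * b - a' * b'\<bar> = \<bar>a * (b - b') + (a - a') * b'\<bar>"
    by (simp add: algebra_simps)
  also have "\<dots> \<le> \<bar>a\<bar> * \<bar>b - b'\<bar> + \<bar>a - a'\<bar> * \<bar>b'\<bar>"
    by (metis abs_mult abs_triangle_ineq)
  also have "\<dots> \<le> A * h + h * (B + 1)"
    using assms by (intro add_mono mult_mono) auto
  finally show ?thesis
    by (simp add: algebra_simps)
qed

lemma rpoly_approximable_mult:
  assumes "compact K" "rpoly_approximable K f" "rpoly_approximable K g"
  shows "rpoly_approximable K (\<lambda>x. f x * g x)"
proof -
  have "bounded (f ` K)" "bounded (g ` K)"
    using assms by (auto intro!: compact_imp_bounded compact_continuous_image simp: rpoly_approximable_def)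
  then obtain A B where A: "\<forall>x\<in>K. \<bar>f x\<bar> \<le> A" and B: "\<forall>x\<in>K. \<bar>g x\<bar> \<le> B"
    unfolding bounded_real by auto
  have "\<exists>p. \<forall>x\<in>K. \<bar>f x * g x - rpoly_eval p x\<bar> \<le> e" if "0 < e" for e
  proof (cases "K = {}")
    case False
    then obtain x0 where "x0 \<in> K"
      by blast
    then have AB: "0 < A + B + 1"
      using A[rule_format, OF \<open>x0 \<in> K\<close>] B[rule_format, OF \<open>x0 \<in> K\<close>] by linarith
    define h where "h = min 1 (e / (A + B + 1))"
    have h: "0 < h" "h \<le> 1"
      using \<open>0 < e\<close> AB by (auto simp: h_def)
    have "h \<le> e / (A + B + 1)"
      by (simp add: h_def)
    then have "h * (A + B + 1) \<le> e"
      using AB by (simp add: le_divide_eq)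
    note h = h this
    obtain p q where p: "\<forall>x\<in>K. \<bar>f x - rpoly_eval p x\<bar> \<le> h"
      and q: "\<forall>x\<in>K. \<bar>g x - rpoly_eval q x\<bar> \<le> h"
      using assms(2,3) h(1) unfolding rpoly_approximable_def by meson
    have "\<bar>f x * g x - rpoly_eval (PMul p q) x\<bar> \<le> e" if "x \<in> K" for x
      using abs_mult_diff_le[OF A[rule_format, OF that] B[rule_format, OF that]
          p[rule_format, OF that] q[rule_format, OF that] less_imp_le[OF h(1)] h(2)] h(3)
      by simp
    then show ?thesis
      by blast
  qed simp
  then show ?thesis
    using assms by (simp add: rpoly_approximable_def continuous_on_mult)
qed

lemma rpoly_dense:
  assumes "compact K" "continuous_on K f" "0 < e"
  shows "\<exists>p. \<forall>x\<in>K. \<bar>f x - rpoly_eval p x\<bar> \<le> e"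
proof -
  have "\<exists>g. rpoly_approximable K g \<and> (\<forall>x\<in>K. \<bar>f x - g x\<bar> < e / 2)"
  proof (rule Stone_Weierstrass_HOL[OF assms(1)])
    show "\<exists>g. rpoly_approximable K g \<and> g x \<noteq> g y" if xy: "x \<in> K \<and> y \<in> K \<and> x \<noteq> y" for x y
    proof -
      obtain i where "x i \<noteq> y i"
        using xy by (auto simp: fun_eq_iff)
      then show ?thesis
        using rpoly_approximable_coord by blast
    qed
  next
    show "rpoly_approximable K (\<lambda>x. c)" for c
      by (rule rpoly_approximable_const)
    show "continuous_on K g" if "rpoly_approximable K g" for g
      using that by (simp add: rpoly_approximable_def)
    show "rpoly_approximable K (\<lambda>x. g x + h x)" if "rpoly_approximable K g \<and> rpoly_approximable K h" for g h
      using that by (simp add: rpoly_approximable_add)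
    show "rpoly_approximable K (\<lambda>x. g x * h x)" if "rpoly_approximable K g \<and> rpoly_approximable K h" for g h
      using that assms(1) by (simp add: rpoly_approximable_mult)
  qed (use assms in auto)
  then obtain g p where g: "\<forall>x\<in>K. \<bar>f x - g x\<bar> < e / 2" and p: "\<forall>x\<in>K. \<bar>g x - rpoly_eval p x\<bar> \<le> e / 2"
    using \<open>0 < e\<close> unfolding rpoly_approximable_def by (meson half_gt_zero)
  have "\<bar>f x - rpoly_eval p x\<bar> \<le> e" if "x \<in> K" for x
    using g[rule_format, OF that] p[rule_format, OF that] by linarith
  then show ?thesis
    by blast
qed

text \<open>Restricting the argument of a connective to its first \<open>length ps\<close> entries makes it
  satisfy the locality condition of \<open>wf\<close>.\<close>

datatype rfm = RReTr rtm | RImTr rtm | RConn rpoly "rfm list" | RSup rat nat rfm | RInf rat nat rfm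

primrec fm_of_rfm :: "rfm \<Rightarrow> fm" where
  "fm_of_rfm (RReTr t) = ReTr (tm_of_rtm t)"
| "fm_of_rfm (RImTr t) = ImTr (tm_of_rtm t)"
| "fm_of_rfm (RConn p ps) =
     Conn (\<lambda>x. rpoly_eval p (\<lambda>i. if i < length ps then x i else 0)) (map fm_of_rfm ps)"
| "fm_of_rfm (RSup q j \<psi>) = SupF (of_rat q) j (fm_of_rfm \<psi>)"
| "fm_of_rfm (RInf q j \<psi>) = InfF (of_rat q) j (fm_of_rfm \<psi>)"

instance rpoly :: countable by countable_datatype
instance rtm :: countable by countable_datatype
instance rfm :: countable by countable_datatype

lemma wf_fm_of_rfm_RConn:
  "wf (fm_of_rfm (RConn p qs)) \<longleftrightarrow> (\<forall>q\<in>set qs. wf (fm_of_rfm q))"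
proof -
  have "rpoly_eval p (\<lambda>i. if i < length qs then x i else 0) = rpoly_eval p (\<lambda>i. if i < length qs then y i else 0)"
    if "\<forall>i<length qs. x i = y i" for x y
    using that by (metis (no_types, lifting))
  then show ?thesis
    by (auto simp: list_all_iff continuous_on_rpoly_eval_restrict)
qed

lemma fm_trace_rat_approx:
  assumes "0 < e"
  shows "\<exists>t'. tm_vars (tm_of_rtm t') = tm_vars t \<and>
    fm_near R e (ReTr t) (ReTr (tm_of_rtm t')) \<and> fm_near R e (ImTr t) (ImTr (tm_of_rtm t'))"
proof -
  obtain t' where "tm_vars (tm_of_rtm t') = tm_vars t"
    and t': "\<forall>n \<rho>. (\<forall>j. opnorm n (\<rho> j) \<le> R) \<longrightarrow>
       cmod (mtr n (tm_eval (Mat n) \<rho> t) - mtr n (tm_eval (Mat n) \<rho> (tm_of_rtm t'))) \<le> e"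
    using tm_trace_rat_approx[OF assms] by blast
  have "cmod (mtr n (tm_eval (Mat n) \<rho> t) - mtr n (tm_eval (Mat n) \<rho> (tm_of_rtm t'))) \<le> e"
    if "env_ball n R \<rho>" for n \<rho>
    using t' env_ball_opnorm[OF that] by blast
  then have "\<bar>fm_eval (Mat n) \<rho> (ReTr t) - fm_eval (Mat n) \<rho> (ReTr (tm_of_rtm t'))\<bar> \<le> e \<and>
      \<bar>fm_eval (Mat n) \<rho> (ImTr t) - fm_eval (Mat n) \<rho> (ImTr (tm_of_rtm t'))\<bar> \<le> e"
    if "env_ball n R \<rho>" for n \<rho>
    using abs_Re_le_cmod[of "mtr n (tm_eval (Mat n) \<rho> t) - mtr n (tm_eval (Mat n) \<rho> (tm_of_rtm t'))"]
      abs_Im_le_cmod[of "mtr n (tm_eval (Mat n) \<rho> t) - mtr n (tm_eval (Mat n) \<rho> (tm_of_rtm t'))"]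
      that by fastforce
  then have "fm_near R e (ReTr t) (ReTr (tm_of_rtm t'))" "fm_near R e (ImTr t) (ImTr (tm_of_rtm t'))"
    unfolding fm_near_def by blast+
  with \<open>tm_vars (tm_of_rtm t') = tm_vars t\<close> show ?thesis
    by blast
qed

lemma fm_rat_approx_Conn:
  assumes wf: "wf (Conn f ps)" and "0 < e"
    and IH: "\<And>p R e. p \<in> set ps \<Longrightarrow> 0 < e \<Longrightarrow>
      \<exists>\<psi>. wf (fm_of_rfm \<psi>) \<and> fv (fm_of_rfm \<psi>) \<subseteq> fv p \<and> fm_near R e p (fm_of_rfm \<psi>)"
  shows "\<exists>\<psi>. wf (fm_of_rfm \<psi>) \<and> fv (fm_of_rfm \<psi>) \<subseteq> fv (Conn f ps) \<and> fm_near R e (Conn f ps) (fm_of_rfm \<psi>)"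
proof -
  note wfs = wf_ConnD(2)[OF wf]
  have "\<exists>B\<ge>0. \<forall>p\<in>set ps. \<forall>n \<rho>. env_ball n R \<rho> \<longrightarrow> \<bar>fm_eval (Mat n) \<rho> p\<bar> \<le> B"
    using fm_eval_Mat_bounded wfs by (intro fm_list_common_bound) blast
  then obtain B where "0 \<le> B" and B: "\<And>p n \<rho>. p \<in> set ps \<Longrightarrow> env_ball n R \<rho> \<Longrightarrow> \<bar>fm_eval (Mat n) \<rho> p\<bar> \<le> B"
    by blast
  define K where "K = cube (B + 1)"
  have "compact K" "continuous_on K f"
    using wf_ConnD(1)[OF wf] by (auto simp: K_def compact_cube intro: continuous_on_subset)
  then have "uniformly_continuous_on K f"
    using compact_uniformly_continuous by blast
  then obtain \<eta> where "0 < \<eta>" and \<eta>: "\<And>x x'. x \<in> K \<Longrightarrow> x' \<in> K \<Longrightarrow> dist x' x < \<eta> \<Longrightarrow> \<bar>f x' - f x\<bar> < e / 2"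
    using half_gt_zero[OF \<open>0 < e\<close>] unfolding uniformly_continuous_on_def dist_real_def by blast
  obtain P where P: "\<forall>x\<in>K. \<bar>f x - rpoly_eval P x\<bar> \<le> e / 2"
    using rpoly_dense[OF \<open>compact K\<close> \<open>continuous_on K f\<close> half_gt_zero[OF \<open>0 < e\<close>]] by blast
  define h where "h = min 1 (\<eta> / 3)"
  have h: "0 < h" "h \<le> 1" "h \<le> \<eta> / 3"
    using \<open>0 < \<eta>\<close> by (auto simp: h_def)
  have "\<forall>p\<in>set ps. \<exists>\<psi>. wf (fm_of_rfm \<psi>) \<and> fv (fm_of_rfm \<psi>) \<subseteq> fv p \<and> fm_near R h p (fm_of_rfm \<psi>)"
    using IH h(1) by blast
  from bchoice[OF this] obtain F where F: "\<forall>p\<in>set ps.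
      wf (fm_of_rfm (F p)) \<and> fv (fm_of_rfm (F p)) \<subseteq> fv p \<and> fm_near R h p (fm_of_rfm (F p))"
    by blast
  define \<psi> where "\<psi> = RConn P (map F ps)"
  have "wf (fm_of_rfm \<psi>)"
    unfolding \<psi>_def wf_fm_of_rfm_RConn using F by auto
  moreover have "fv (fm_of_rfm \<psi>) \<subseteq> fv (Conn f ps)"
    using F by (fastforce simp: \<psi>_def)
  moreover have "\<bar>fm_eval (Mat n) \<rho> (Conn f ps) - fm_eval (Mat n) \<rho> (fm_of_rfm \<psi>)\<bar> \<le> e"
    if \<rho>: "env_ball n R \<rho>" for n \<rho>
  proof -
    let ?a = "fm_args (fm_eval (Mat n) \<rho>) ps"
      and ?b = "fm_args (fm_eval (Mat n) \<rho>) (map fm_of_rfm (map F ps))"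
    have ab: "\<bar>?a i - ?b i\<bar> \<le> h" for i
    proof (cases "i < length ps")
      case True
      then have "fm_near R h (ps ! i) (fm_of_rfm (F (ps ! i)))"
        using F nth_mem by blast
      then show ?thesis
        using True \<rho> by (simp add: fm_args_def fm_near_def)
    qed (use h in \<open>simp add: fm_args_def\<close>)
    have "?a \<in> cube B"
      using B \<rho> \<open>0 \<le> B\<close> by (auto intro!: fm_args_in_cube)
    then have a_le: "\<bar>?a i\<bar> \<le> B" for i
      unfolding cube_def by blast
    have "\<bar>?a i\<bar> \<le> B + 1" "\<bar>?b i\<bar> \<le> B + 1" for i
      using a_le[of i] ab[of i] h(2) by linarith+
    then have "?a \<in> K" "?b \<in> K"
      unfolding K_def cube_def by blast+
    moreover have "dist ?b ?a < \<eta>"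
      using dist_fun_le_sup[of ?b ?a h] ab h \<open>0 < \<eta>\<close> by (simp add: dist_real_def abs_minus_commute)
    ultimately have "\<bar>f ?b - f ?a\<bar> < e / 2" "\<bar>f ?b - rpoly_eval P ?b\<bar> \<le> e / 2"
      using \<eta> P by auto
    moreover have "(\<lambda>i. if i < length (map F ps) then ?b i else 0) = ?b"
      by (auto simp: fm_args_def)
    then have "fm_eval (Mat n) \<rho> (fm_of_rfm \<psi>) = rpoly_eval P ?b"
      unfolding \<psi>_def fm_of_rfm.simps fm_eval_Conn by simp
    ultimately show ?thesis
      unfolding fm_eval_Conn by linarith
  qed
  ultimately show ?thesis
    unfolding fm_near_def by blast
qed

lemma fm_eval_Mat_quantifier_radius_close:
  assumes "0 < r" "0 < q" "R \<le> R'" "r \<le> R'" "q \<le> R'" "\<bar>r - q\<bar> \<le> \<delta>"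
    and close: "\<And>n \<rho> \<rho>'. env_ball n R' \<rho> \<Longrightarrow> env_ball n R' \<rho>' \<Longrightarrow> env_close n \<delta> \<rho> \<rho>' \<Longrightarrow>
      \<bar>fm_eval (Mat n) \<rho> \<phi> - fm_eval (Mat n) \<rho>' \<phi>\<bar> \<le> e1"
    and near: "fm_near R' e2 \<phi> \<psi>"
    and bnd: "\<And>n \<rho>. env_ball n R' \<rho> \<Longrightarrow> \<bar>fm_eval (Mat n) \<rho> \<phi>\<bar> \<le> B \<and> \<bar>fm_eval (Mat n) \<rho> \<psi>\<bar> \<le> B"
    and \<rho>: "env_ball n R \<rho>"
  shows "\<bar>fm_eval (Mat n) \<rho> (SupF r j \<phi>) - fm_eval (Mat n) \<rho> (SupF q j \<psi>)\<bar> \<le> e1 + e2"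
    and "\<bar>fm_eval (Mat n) \<rho> (InfF r j \<phi>) - fm_eval (Mat n) \<rho> (InfF q j \<psi>)\<bar> \<le> e1 + e2"
proof -
  let ?f = "\<lambda>z. fm_eval (Mat n) (\<rho>(j := z)) \<phi>" and ?g = "\<lambda>w. fm_eval (Mat n) (\<rho>(j := w)) \<psi>"
  have upd: "env_ball n R' (\<rho>(j := z))" if "z \<in> ball_r (Mat n) s" "s \<le> R'" for z s
    using env_ball_upd[OF \<rho> that(1) \<open>R \<le> R'\<close> that(2)] .
  have fg_close: "\<bar>?f z - ?g w\<bar> \<le> e1 + e2" if "z \<in> ball_r (Mat n) r" "w \<in> ball_r (Mat n) q"
    "opnorm n (msub z w) \<le> \<delta>" for z w
  proof -
    have "env_close n \<delta> (\<rho>(j := z)) (\<rho>(j := w))"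
      using env_close_upd[OF env_close_refl that(3)] that(3) opnorm_nonneg order_trans by blast
    then have "\<bar>?f z - ?f w\<bar> \<le> e1"
      using close upd that(1,2) assms(4,5) by blast
    moreover have "\<bar>?f w - ?g w\<bar> \<le> e2"
      using near upd[OF that(2) \<open>q \<le> R'\<close>] unfolding fm_near_def by blast
    ultimately show ?thesis
      by linarith
  qed
  have fg: "\<exists>w\<in>ball_r (Mat n) q. \<bar>?f z - ?g w\<bar> \<le> e1 + e2" if z: "z \<in> ball_r (Mat n) r" for z
  proof -
    obtain w where "w \<in> ball_r (Mat n) q" "opnorm n (msub z w) \<le> \<bar>r - q\<bar>"
      using ball_r_Mat_rescale[OF z \<open>0 < r\<close> less_imp_le[OF \<open>0 < q\<close>]] by blast
    then show ?thesis
      using fg_close[OF z] \<open>\<bar>r - q\<bar> \<le> \<delta>\<close> by fastforce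
  qed
  have gf: "\<exists>z\<in>ball_r (Mat n) r. \<bar>?f z - ?g w\<bar> \<le> e1 + e2" if w: "w \<in> ball_r (Mat n) q" for w
  proof -
    obtain z where "z \<in> ball_r (Mat n) r" "opnorm n (msub w z) \<le> \<bar>q - r\<bar>"
      using ball_r_Mat_rescale[OF w \<open>0 < q\<close> less_imp_le[OF \<open>0 < r\<close>]] by blast
    then show ?thesis
      using fg_close[OF _ w] \<open>\<bar>r - q\<bar> \<le> \<delta>\<close> by (fastforce simp: opnorm_msub_commute abs_minus_commute)
  qed
  have ne: "ball_r (Mat n) r \<noteq> {}" "ball_r (Mat n) q \<noteq> {}"
    using zero_in_ball_r_Mat \<open>0 < r\<close> \<open>0 < q\<close> by (metis empty_iff less_imp_le)+
  have bf: "\<bar>?f z\<bar> \<le> B" if "z \<in> ball_r (Mat n) r" for z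
    using bnd[OF upd[OF that \<open>r \<le> R'\<close>]] by blast
  have bg: "\<bar>?g w\<bar> \<le> B" if "w \<in> ball_r (Mat n) q" for w
    using bnd[OF upd[OF that \<open>q \<le> R'\<close>]] by blast
  note le = abs_cSUP_cINF_diff_le[OF ne bf bg fg gf]
  show "\<bar>fm_eval (Mat n) \<rho> (SupF r j \<phi>) - fm_eval (Mat n) \<rho> (SupF q j \<psi>)\<bar> \<le> e1 + e2"
    "\<bar>fm_eval (Mat n) \<rho> (InfF r j \<phi>) - fm_eval (Mat n) \<rho> (InfF q j \<psi>)\<bar> \<le> e1 + e2"
    using le by simp_all
qed

lemma fm_rat_approx_quantifier:
  assumes "wf \<phi>" "0 < r" "0 < e"
    and IH: "\<And>R e. 0 < e \<Longrightarrow>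
      \<exists>\<psi>. wf (fm_of_rfm \<psi>) \<and> fv (fm_of_rfm \<psi>) \<subseteq> fv \<phi> \<and> fm_near R e \<phi> (fm_of_rfm \<psi>)"
  shows "\<exists>q \<psi>. 0 < (of_rat q :: real) \<and> wf (fm_of_rfm \<psi>) \<and> fv (fm_of_rfm \<psi>) \<subseteq> fv \<phi> \<and>
    fm_near R e (SupF r j \<phi>) (SupF (of_rat q) j (fm_of_rfm \<psi>)) \<and>
    fm_near R e (InfF r j \<phi>) (InfF (of_rat q) j (fm_of_rfm \<psi>))"
proof -
  define R' where "R' = max R r + 1"
  obtain \<delta> where "0 < \<delta>" and \<delta>: "\<And>n \<rho> \<rho>'. env_ball n R' \<rho> \<Longrightarrow> env_ball n R' \<rho>' \<Longrightarrow>
      env_close n \<delta> \<rho> \<rho>' \<Longrightarrow> \<bar>fm_eval (Mat n) \<rho> \<phi> - fm_eval (Mat n) \<rho>' \<phi>\<bar> \<le> e / 2"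
    using fm_eval_Mat_uniformly_continuous[OF \<open>wf \<phi>\<close> half_gt_zero[OF \<open>0 < e\<close>], of R'] by blast
  define \<theta> where "\<theta> = min (min \<delta> 1) (r / 2)"
  have "0 < \<theta>"
    using \<open>0 < \<delta>\<close> \<open>0 < r\<close> by (simp add: \<theta>_def)
  then obtain q where q: "\<bar>r - of_rat q\<bar> \<le> \<theta>"
    using exists_rat_near by blast
  have "\<theta> \<le> \<delta>" "\<theta> \<le> 1" "\<theta> \<le> r / 2"
    by (auto simp: \<theta>_def)
  then have q_pos: "0 < (of_rat q :: real)" and rq: "\<bar>r - of_rat q\<bar> \<le> \<delta>"
    and q_le: "of_rat q \<le> r + 1"
    using q \<open>0 < r\<close> by linarith+
  have radii: "R \<le> R'" "r \<le> R'" "of_rat q \<le> R'"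
    using q_le unfolding R'_def by auto
  obtain \<psi> where \<psi>: "wf (fm_of_rfm \<psi>)" "fv (fm_of_rfm \<psi>) \<subseteq> fv \<phi>" "fm_near R' (e / 2) \<phi> (fm_of_rfm \<psi>)"
    using IH[OF half_gt_zero[OF \<open>0 < e\<close>], of R'] by blast
  obtain B1 B2 where B1: "\<And>n \<rho>. env_ball n R' \<rho> \<Longrightarrow> \<bar>fm_eval (Mat n) \<rho> \<phi>\<bar> \<le> B1"
    and B2: "\<And>n \<rho>. env_ball n R' \<rho> \<Longrightarrow> \<bar>fm_eval (Mat n) \<rho> (fm_of_rfm \<psi>)\<bar> \<le> B2"
    using fm_eval_Mat_bounded[OF \<open>wf \<phi>\<close>] fm_eval_Mat_bounded[OF \<psi>(1)] by metis
  have bnd: "\<bar>fm_eval (Mat n) \<rho> \<phi>\<bar> \<le> max B1 B2 \<and> \<bar>fm_eval (Mat n) \<rho> (fm_of_rfm \<psi>)\<bar> \<le> max B1 B2"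
    if "env_ball n R' \<rho>" for n \<rho>
    using B1[OF that] B2[OF that] by linarith
  note close = fm_eval_Mat_quantifier_radius_close[OF \<open>0 < r\<close> q_pos radii rq \<delta> \<psi>(3) bnd]
  have "fm_near R e (SupF r j \<phi>) (SupF (of_rat q) j (fm_of_rfm \<psi>))"
    "fm_near R e (InfF r j \<phi>) (InfF (of_rat q) j (fm_of_rfm \<psi>))"
    using close by (auto simp: fm_near_def)
  then show ?thesis
    using q_pos \<psi>(1,2) by blast
qed

lemma fm_rat_approx:
  assumes "wf \<phi>" "0 < e"
  shows "\<exists>\<psi>. wf (fm_of_rfm \<psi>) \<and> fv (fm_of_rfm \<psi>) \<subseteq> fv \<phi> \<and> fm_near R e \<phi> (fm_of_rfm \<psi>)"
  using assms
proof (induction \<phi> arbitrary: R e)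
  case (ReTr t)
  then obtain t' where "tm_vars (tm_of_rtm t') = tm_vars t" "fm_near R e (ReTr t) (ReTr (tm_of_rtm t'))"
    using fm_trace_rat_approx by blast
  then show ?case
    by (intro exI[of _ "RReTr t'"]) simp
next
  case (ImTr t)
  then obtain t' where "tm_vars (tm_of_rtm t') = tm_vars t" "fm_near R e (ImTr t) (ImTr (tm_of_rtm t'))"
    using fm_trace_rat_approx by blast
  then show ?case
    by (intro exI[of _ "RImTr t'"]) simp
next
  case (Conn f ps)
  show ?case
    by (rule fm_rat_approx_Conn[OF Conn.prems]) (use Conn.IH wf_ConnD(2)[OF Conn.prems(1)] in blast)
next
  case (SupF r j \<phi>)
  then have "wf \<phi>" "0 < r"
    by auto
  then obtain q \<psi> where "0 < (of_rat q :: real)" "wf (fm_of_rfm \<psi>)" "fv (fm_of_rfm \<psi>) \<subseteq> fv \<phi>"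
    "fm_near R e (SupF r j \<phi>) (SupF (of_rat q) j (fm_of_rfm \<psi>))"
    using fm_rat_approx_quantifier[OF _ _ SupF.prems(2) SupF.IH] by blast
  then show ?case
    by (intro exI[of _ "RSup q j \<psi>"]) auto
next
  case (InfF r j \<phi>)
  then have "wf \<phi>" "0 < r"
    by auto
  then obtain q \<psi> where "0 < (of_rat q :: real)" "wf (fm_of_rfm \<psi>)" "fv (fm_of_rfm \<psi>) \<subseteq> fv \<phi>"
    "fm_near R e (InfF r j \<phi>) (InfF (of_rat q) j (fm_of_rfm \<psi>))"
    using fm_rat_approx_quantifier[OF _ _ InfF.prems(2) InfF.IH] by blast
  then show ?case
    by (intro exI[of _ "RInf q j \<psi>"]) auto
qed

section \<open>Ultrafilter limits\<close>

lemma tendsto_fun_coordinatewise: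
  fixes v :: "'x \<Rightarrow> nat \<Rightarrow> real"
  assumes "\<And>i. ((\<lambda>n. v n i) \<longlongrightarrow> a i) F"
  shows "(v \<longlongrightarrow> a) F"
proof -
  have "limitin (product_topology (\<lambda>i. euclidean) UNIV) v a F"
    using assms by (simp add: limitin_componentwise)
  then show ?thesis
    by (metis euclidean_product_topology limitin_canonical_iff)
qed

lemma diagonal_choice:
  fixes g :: "nat \<Rightarrow> 'b \<Rightarrow> nat \<Rightarrow> real"
  assumes "F \<le> sequentially" "\<And>n. A n \<noteq> {}"
    and close: "\<And>k. eventually (\<lambda>n. \<exists>x\<in>A n. \<forall>i<k. \<bar>g n x i - m i\<bar> < 1 / Suc k) F"
  shows "\<exists>z. (\<forall>n. z n \<in> A n) \<and> (\<forall>i. ((\<lambda>n. g n (z n) i) \<longlongrightarrow> m i) F)"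
proof -
  define good where "good n k x \<longleftrightarrow> x \<in> A n \<and> (\<forall>i<k. \<bar>g n x i - m i\<bar> < 1 / Suc k)" for n k x
  define K where "K n = Max {k. k \<le> n \<and> (\<exists>x. good n k x)}" for n
  have fin: "finite {k. k \<le> n \<and> (\<exists>x. good n k x)}" for n
    by simp
  have "0 \<in> {k. k \<le> n \<and> (\<exists>x. good n k x)}" for n
    using assms(2)[of n] by (auto simp: good_def)
  then have "K n \<in> {k. k \<le> n \<and> (\<exists>x. good n k x)}" for n
    unfolding K_def using fin by (intro Max_in) auto
  then have "\<forall>n. \<exists>x. good n (K n) x"
    by blast
  from choice[OF this] obtain z where z: "\<And>n. good n (K n) (z n)"
    by blast
  have K: "eventually (\<lambda>n. k \<le> K n) F" for k
  proof -
    have "eventually (\<lambda>n. k \<le> n) F"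
      using assms(1) by (simp add: filter_leD eventually_ge_at_top)
    then show ?thesis
      using close[of k]
    proof eventually_elim
      case (elim n)
      then have "k \<in> {k. k \<le> n \<and> (\<exists>x. good n k x)}"
        by (auto simp: good_def)
      then show ?case
        unfolding K_def using fin by (rule Max_ge[rotated])
    qed
  qed
  have "((\<lambda>n. g n (z n) i) \<longlongrightarrow> m i) F" for i
  proof (rule tendstoI)
    fix \<epsilon> :: real assume "0 < \<epsilon>"
    then obtain k0 where k0: "inverse (real (Suc k0)) < \<epsilon>"
      using reals_Archimedean by blast
    define k where "k = max k0 (Suc i)"
    have "1 / real (Suc k) \<le> 1 / real (Suc k0)"
      by (intro divide_left_mono) (auto simp: k_def)
    then have k: "i < k" "1 / real (Suc k) < \<epsilon>"
      using k0 by (auto simp: k_def inverse_eq_divide)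
    show "eventually (\<lambda>n. dist (g n (z n) i) (m i) < \<epsilon>) F"
      using K[of k]
    proof eventually_elim
      case (elim n)
      then have "\<bar>g n (z n) i - m i\<bar> < 1 / Suc (K n)"
        using z[of n] k(1) by (simp add: good_def)
      also have "1 / real (Suc (K n)) \<le> 1 / real (Suc k)"
        using elim by (intro divide_left_mono) auto
      finally show ?case
        using k(2) by (simp add: dist_real_def)
    qed
  qed
  with z show ?thesis
    by (auto simp: good_def)
qed

lemma tendsto_zero_dominated:
  fixes f g :: "'a \<Rightarrow> real"
  assumes "\<And>n. 0 \<le> f n" "\<And>n. f n \<le> g n" "(g \<longlongrightarrow> 0) F"
  shows "(f \<longlongrightarrow> 0) F"
  by (rule Lim_null_comparison[OF always_eventually assms(3)]) (use assms(1,2) in simp)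

context
  fixes U :: "nat filter"
  assumes U: "free_ultrafilter U"
begin

lemma ultra_nontrivial: "U \<noteq> bot"
  using U by (simp add: free_ultrafilter_def)

lemma ultra_cases: "eventually P U \<or> eventually (\<lambda>x. \<not> P x) U"
  using U by (simp add: free_ultrafilter_def)

lemma ultra_le_sequentially: "U \<le> sequentially"
proof -
  have "eventually (\<lambda>n. N \<le> n) U" for N
  proof -
    have "\<forall>k\<in>{..<N}. eventually (\<lambda>n. n \<noteq> k) U"
      using U unfolding free_ultrafilter_def by auto
    then have "eventually (\<lambda>n. \<forall>k\<in>{..<N}. n \<noteq> k) U"
      by (rule eventually_ball_finite[rotated]) simp
    then show ?thesis
      by eventually_elim (auto simp: not_less[symmetric])
  qed
  then show ?thesis
    unfolding le_filter_def eventually_sequentially by (metis (mono_tags, lifting) eventually_mono)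
qed

lemma ultra_tendsto_compact:
  assumes K: "compact K" and ev: "eventually (\<lambda>n. f n \<in> K) U"
  shows "\<exists>l\<in>K. (f \<longlongrightarrow> l) U"
proof -
  have "filtermap f U \<noteq> bot"
    using ultra_nontrivial by (simp add: filtermap_bot_iff)
  moreover have "eventually (\<lambda>x. x \<in> K) (filtermap f U)"
    using ev by (simp add: eventually_filtermap)
  ultimately obtain l where "l \<in> K" and l: "inf (nhds l) (filtermap f U) \<noteq> bot"
    using K unfolding compact_filter by blast
  have "eventually (\<lambda>n. f n \<in> S) U" if "open S" "l \<in> S" for S
  proof (rule ccontr)
    assume "\<not> eventually (\<lambda>n. f n \<in> S) U"
    then have "eventually (\<lambda>n. f n \<notin> S) U"
      using ultra_cases[of "\<lambda>n. f n \<in> S"] by simp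
    then have "eventually (\<lambda>x. x \<notin> S) (filtermap f U)"
      by (simp add: eventually_filtermap)
    moreover have "eventually (\<lambda>x. x \<in> S) (nhds l)"
      using that by (rule eventually_nhds_in_open)
    ultimately have "eventually (\<lambda>x. False) (inf (nhds l) (filtermap f U))"
      unfolding eventually_inf by blast
    then show False
      using l by (simp add: eventually_False)
  qed
  then show ?thesis
    using \<open>l \<in> K\<close> by (blast intro: topological_tendstoI)
qed

lemma ultra_tendsto_bounded:
  fixes f :: "nat \<Rightarrow> 'a::{real_normed_vector,heine_borel}"
  assumes "\<And>n. norm (f n) \<le> B"
  shows "\<exists>l. (f \<longlongrightarrow> l) U"
proof -
  have "eventually (\<lambda>n. f n \<in> cball 0 B) U"
    by (intro always_eventually allI) (simp add: assms)
  then show ?thesis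
    using ultra_tendsto_compact[OF compact_cball] by blast
qed

lemma ultra_Lim: "(f \<longlongrightarrow> l) U \<Longrightarrow> Lim U f = l"
  using ultra_nontrivial by (simp add: tendsto_Lim)

lemma ultra_tendsto_le:
  fixes a b :: real
  shows "(f \<longlongrightarrow> a) U \<Longrightarrow> (g \<longlongrightarrow> b) U \<Longrightarrow> eventually (\<lambda>n. f n \<le> g n) U \<Longrightarrow> a \<le> b"
  using ultra_nontrivial tendsto_le by metis

text \<open>Near-maximisers \<open>z n\<close> give an element of \<open>AQ\<close> bounding the limit of the suprema;
  conversely every value of \<open>G\<close> is approached along sequences in the sets \<open>A n\<close>.\<close>

lemma ultra_tendsto_SUP:
  fixes F :: "nat \<Rightarrow> 'z \<Rightarrow> real" and G :: "'c \<Rightarrow> real"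
  assumes A: "\<And>n. A n \<noteq> {}" and AQ: "AQ \<noteq> {}"
    and bnd: "\<And>n z. z \<in> A n \<Longrightarrow> \<bar>F n z\<bar> \<le> M" "\<And>C. C \<in> AQ \<Longrightarrow> \<bar>G C\<bar> \<le> M"
    and lim: "\<And>z. (\<And>n. z n \<in> A n) \<Longrightarrow> \<exists>C\<in>AQ. ((\<lambda>n. F n (z n)) \<longlongrightarrow> G C) U"
    and approx: "\<And>C e. C \<in> AQ \<Longrightarrow> 0 < e \<Longrightarrow>
       \<exists>z v. (\<forall>n. z n \<in> A n) \<and> (v \<longlongrightarrow> G C) U \<and> (\<forall>n. \<bar>v n - F n (z n)\<bar> \<le> e)"
  shows "((\<lambda>n. SUP z\<in>A n. F n z) \<longlongrightarrow> (SUP C\<in>AQ. G C)) U"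
proof -
  define S where "S n = (SUP z\<in>A n. F n z)" for n
  have bddA: "bdd_above (F n ` A n)" for n
    using bnd(1) by (intro bdd_aboveI2[of _ _ M]) (auto simp: abs_le_iff)
  have bddQ: "bdd_above (G ` AQ)"
    using bnd(2) by (intro bdd_aboveI2[of _ _ M]) (auto simp: abs_le_iff)
  have "norm (S n) \<le> M" for n
    using abs_cSUP_cINF_le(1)[OF A bnd(1)] by (simp add: S_def)
  then obtain l where l: "(S \<longlongrightarrow> l) U"
    using ultra_tendsto_bounded by blast
  have "l \<le> (SUP C\<in>AQ. G C)"
  proof -
    have "\<exists>w. w \<in> A n \<and> S n - inverse (real (Suc n)) < F n w" for n
    proof -
      have "S n - inverse (real (Suc n)) < S n"
        by simp
      then show ?thesis
        unfolding S_def using less_cSUP_iff[OF A bddA] by blast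
    qed
    then obtain z where z: "\<And>n. z n \<in> A n" "\<And>n. S n - inverse (real (Suc n)) < F n (z n)"
      by metis
    obtain C where C: "C \<in> AQ" "((\<lambda>n. F n (z n)) \<longlongrightarrow> G C) U"
      using lim[OF z(1)] by blast
    have "((\<lambda>n. S n - inverse (real (Suc n))) \<longlongrightarrow> l - 0) U"
      using tendsto_mono[OF ultra_le_sequentially LIMSEQ_inverse_real_of_nat] by (intro tendsto_diff l)
    then have "l \<le> G C"
      using ultra_tendsto_le[OF _ C(2)] z(2) by (simp add: less_imp_le)
    also have "G C \<le> (SUP C\<in>AQ. G C)"
      using bddQ C(1) by (rule cSUP_upper2) simp
    finally show ?thesis .
  qed
  moreover have "G C \<le> l" if C: "C \<in> AQ" for C
  proof (rule field_le_epsilon)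
    fix e :: real assume "0 < e"
    then obtain z v where z: "\<forall>n. z n \<in> A n" and v: "(v \<longlongrightarrow> G C) U" "\<forall>n. \<bar>v n - F n (z n)\<bar> \<le> e"
      using approx[OF C] by blast
    have "v n \<le> S n + e" for n
      using v(2)[rule_format, of n] cSUP_upper[OF z[rule_format] bddA, of n] unfolding S_def
      by linarith
    then show "G C \<le> l + e"
      using ultra_tendsto_le[OF v(1) tendsto_add[OF l tendsto_const]] by simp
  qed
  then have "(SUP C\<in>AQ. G C) \<le> l"
    by (rule cSUP_least[OF AQ])
  ultimately have "l = (SUP C\<in>AQ. G C)"
    by (rule antisym)
  with l show ?thesis
    by (simp add: S_def[abs_def])
qed

lemma ultra_tendsto_SUP_INF:
  fixes F :: "nat \<Rightarrow> 'z \<Rightarrow> real" and G :: "'c \<Rightarrow> real"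
  assumes A: "\<And>n. A n \<noteq> {}" and AQ: "AQ \<noteq> {}"
    and bnd: "\<And>n z. z \<in> A n \<Longrightarrow> \<bar>F n z\<bar> \<le> M" "\<And>C. C \<in> AQ \<Longrightarrow> \<bar>G C\<bar> \<le> M"
    and lim: "\<And>z. (\<And>n. z n \<in> A n) \<Longrightarrow> \<exists>C\<in>AQ. ((\<lambda>n. F n (z n)) \<longlongrightarrow> G C) U"
    and approx: "\<And>C e. C \<in> AQ \<Longrightarrow> 0 < e \<Longrightarrow>
       \<exists>z v. (\<forall>n. z n \<in> A n) \<and> (v \<longlongrightarrow> G C) U \<and> (\<forall>n. \<bar>v n - F n (z n)\<bar> \<le> e)"
  shows "((\<lambda>n. SUP z\<in>A n. F n z) \<longlongrightarrow> (SUP C\<in>AQ. G C)) U"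
    and "((\<lambda>n. INF z\<in>A n. F n z) \<longlongrightarrow> (INF C\<in>AQ. G C)) U"
proof -
  show "((\<lambda>n. SUP z\<in>A n. F n z) \<longlongrightarrow> (SUP C\<in>AQ. G C)) U"
    by (rule ultra_tendsto_SUP[OF A AQ bnd lim approx])
  have "((\<lambda>n. SUP z\<in>A n. - F n z) \<longlongrightarrow> (SUP C\<in>AQ. - G C)) U"
  proof (rule ultra_tendsto_SUP[OF A AQ])
    show "\<exists>C\<in>AQ. ((\<lambda>n. - F n (z n)) \<longlongrightarrow> - G C) U" if "\<And>n. z n \<in> A n" for z
      using lim[OF that] tendsto_minus by blast
    show "\<exists>z v. (\<forall>n. z n \<in> A n) \<and> (v \<longlongrightarrow> - G C) U \<and> (\<forall>n. \<bar>v n - - F n (z n)\<bar> \<le> e)"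
      if Ce: "C \<in> AQ" "0 < e" for C e
    proof -
      obtain z v where "\<forall>n. z n \<in> A n" "(v \<longlongrightarrow> G C) U" "\<forall>n. \<bar>v n - F n (z n)\<bar> \<le> e"
        using approx[OF Ce] by blast
      then show ?thesis
        by (intro exI[of _ z] exI[of _ "\<lambda>n. - v n"]) (auto intro: tendsto_minus simp: abs_minus_commute)
    qed
  qed (use bnd in auto)
  then have "((\<lambda>n. - (SUP z\<in>A n. - F n z)) \<longlongrightarrow> - (SUP C\<in>AQ. - G C)) U"
    by (rule tendsto_minus)
  then show "((\<lambda>n. INF z\<in>A n. F n z) \<longlongrightarrow> (INF C\<in>AQ. G C)) U"
    by (simp add: Inf_real_def image_image)
qed

end

section \<open>The tracial ultraproduct and Los's theorem\<close>

lemma bseq_bound: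
  assumes "x \<in> bseq"
  shows "\<exists>B\<ge>0. \<forall>n. opnorm n (x n) \<le> B"
proof -
  obtain B where B: "\<forall>n. opnorm n (x n) \<le> B"
    using assms by (auto simp: bseq_def)
  moreover have "0 \<le> B"
    using B opnorm_nonneg[of 0 "x 0"] by (meson order_trans)
  ultimately show ?thesis
    by blast
qed

lemma bseqI: "(\<And>n. x n \<in> t_car (Mat n)) \<Longrightarrow> (\<And>n. opnorm n (x n) \<le> B) \<Longrightarrow> x \<in> bseq"
  unfolding bseq_def by blast

lemma bseq_car: "x \<in> bseq \<Longrightarrow> x n \<in> t_car (Mat n)"
  unfolding bseq_def by blast

lemma bseq_closed:
  assumes "x \<in> bseq" "y \<in> bseq"
  shows "(\<lambda>n. madd (x n) (y n)) \<in> bseq" "(\<lambda>n. mmul n (x n) (y n)) \<in> bseq"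
    "(\<lambda>n. mscl c (x n)) \<in> bseq" "(\<lambda>n. mstar (x n)) \<in> bseq"
proof -
  obtain Bx where "0 \<le> Bx" and Bx: "\<And>n. opnorm n (x n) \<le> Bx"
    using bseq_bound[OF assms(1)] by blast
  obtain By where By: "\<And>n. opnorm n (y n) \<le> By"
    using bseq_bound[OF assms(2)] by blast
  have car: "x n \<in> t_car (Mat n)" "y n \<in> t_car (Mat n)" for n
    using assms by (simp_all add: bseq_car)
  show "(\<lambda>n. madd (x n) (y n)) \<in> bseq"
  proof (rule bseqI)
    show "madd (x n) (y n) \<in> t_car (Mat n)" for n
      using car by (rule car_Mat_closed)
    show "opnorm n (madd (x n) (y n)) \<le> Bx + By" for n
      using opnorm_madd_le[of n "x n" "y n"] Bx[of n] By[of n] by linarith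
  qed
  show "(\<lambda>n. mmul n (x n) (y n)) \<in> bseq"
  proof (rule bseqI)
    show "mmul n (x n) (y n) \<in> t_car (Mat n)" for n
      using car by (rule car_Mat_closed)
    show "opnorm n (mmul n (x n) (y n)) \<le> Bx * By" for n
      using opnorm_mmul_le[of n "x n" "y n"] mult_mono[OF Bx[of n] By[of n] \<open>0 \<le> Bx\<close> opnorm_nonneg]
      by linarith
  qed
  show "(\<lambda>n. mscl c (x n)) \<in> bseq"
  proof (rule bseqI)
    show "mscl c (x n) \<in> t_car (Mat n)" for n
      using car(1) by (rule car_Mat_closed)
    show "opnorm n (mscl c (x n)) \<le> cmod c * Bx" for n
      using opnorm_mscl_le[of n c "x n"] mult_left_mono[OF Bx[of n] norm_ge_zero[of c]] by linarith
  qed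
  show "(\<lambda>n. mstar (x n)) \<in> bseq"
  proof (rule bseqI)
    show "mstar (x n) \<in> t_car (Mat n)" for n
      using car(1) by (rule car_Mat_closed)
    show "opnorm n (mstar (x n)) \<le> Bx" for n
      using opnorm_mstar_le[of n "x n"] Bx[of n] by linarith
  qed
qed

lemma bseq_mone: "(\<lambda>n. mone n) \<in> bseq"
  by (rule bseqI[of _ 1]) (simp_all add: car_Mat_closed opnorm_mone_le)

lemma ucls_iff: "y \<in> ucls U x \<longleftrightarrow> y \<in> bseq \<and> ((\<lambda>n. hsnorm n (msub (x n) (y n))) \<longlongrightarrow> 0) U"
  by (simp add: ucls_def norm2_Mat t_diff_Mat)

lemma ucls_self: "x \<in> bseq \<Longrightarrow> x \<in> ucls U x"
  by (simp add: ucls_iff)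

lemma ucls_subset:
  assumes "((\<lambda>n. hsnorm n (msub (x n) (y n))) \<longlongrightarrow> 0) U"
  shows "ucls U y \<subseteq> ucls U x"
proof
  fix z assume "z \<in> ucls U y"
  then have "z \<in> bseq" and yz: "((\<lambda>n. hsnorm n (msub (y n) (z n))) \<longlongrightarrow> 0) U"
    by (auto simp: ucls_iff)
  have "hsnorm n (msub (x n) (z n)) \<le> hsnorm n (msub (x n) (y n)) + hsnorm n (msub (y n) (z n))" for n
    using hsnorm_madd_le[of n "msub (x n) (y n)" "msub (y n) (z n)"] msub_via_mid[of "x n" "z n" "y n"]
    by simp
  then have "((\<lambda>n. hsnorm n (msub (x n) (z n))) \<longlongrightarrow> 0) U"
    by (rule tendsto_zero_dominated[OF hsnorm_nonneg _ tendsto_add_zero[OF assms yz]])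
  then show "z \<in> ucls U x"
    using \<open>z \<in> bseq\<close> by (simp add: ucls_iff)
qed

lemma ucls_eqI:
  assumes "((\<lambda>n. hsnorm n (msub (x n) (y n))) \<longlongrightarrow> 0) U"
  shows "ucls U x = ucls U y"
proof -
  have yx: "((\<lambda>n. hsnorm n (msub (y n) (x n))) \<longlongrightarrow> 0) U"
    using assms by (simp add: hsnorm_msub_commute)
  show ?thesis
    using ucls_subset[OF assms] ucls_subset[OF yx] by blast
qed

lemma rep_ucls:
  assumes "x \<in> bseq"
  shows "rep (ucls U x) \<in> bseq" "((\<lambda>n. hsnorm n (msub (rep (ucls U x) n) (x n))) \<longlongrightarrow> 0) U"
proof -
  have "rep (ucls U x) \<in> ucls U x"
    unfolding rep_def by (rule someI[of _ x]) (rule ucls_self[OF assms])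
  then show "rep (ucls U x) \<in> bseq" "((\<lambda>n. hsnorm n (msub (rep (ucls U x) n) (x n))) \<longlongrightarrow> 0) U"
    by (auto simp: ucls_iff hsnorm_msub_commute)
qed

lemma Qalg_car: "t_car (Qalg U) = ucls U ` bseq"
  by (simp add: Qalg_def)

lemma Qalg_mone: "t_one (Qalg U) = ucls U (\<lambda>n. mone n)"
  by (simp add: Qalg_def)

lemma Qalg_madd:
  assumes "x \<in> bseq" "y \<in> bseq"
  shows "t_add (Qalg U) (ucls U x) (ucls U y) = ucls U (\<lambda>n. madd (x n) (y n))"
proof -
  let ?rx = "rep (ucls U x)" and ?ry = "rep (ucls U y)"
  have "((\<lambda>n. hsnorm n (msub (madd (?rx n) (?ry n)) (madd (x n) (y n)))) \<longlongrightarrow> 0) U"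
    by (intro tendsto_zero_dominated[OF hsnorm_nonneg hsnorm_madd_diff_le]
        tendsto_add_zero rep_ucls(2) assms)
  from ucls_eqI[OF this] show ?thesis
    by (simp add: Qalg_def)
qed

lemma Qalg_mmul:
  assumes "x \<in> bseq" "y \<in> bseq"
  shows "t_mul (Qalg U) (ucls U x) (ucls U y) = ucls U (\<lambda>n. mmul n (x n) (y n))"
proof -
  let ?rx = "rep (ucls U x)" and ?ry = "rep (ucls U y)"
  obtain Bx where Bx: "\<And>n. opnorm n (?rx n) \<le> Bx"
    using bseq_bound[OF rep_ucls(1)[OF assms(1)]] by blast
  obtain By where By: "\<And>n. opnorm n (y n) \<le> By"
    using bseq_bound[OF assms(2)] by blast
  have le: "opnorm n (?rx n) * hsnorm n (msub (?ry n) (y n)) + hsnorm n (msub (?rx n) (x n)) * opnorm n (y n)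
      \<le> Bx * hsnorm n (msub (?ry n) (y n)) + hsnorm n (msub (?rx n) (x n)) * By" for n
    using Bx[of n] By[of n] by (intro add_mono mult_right_mono mult_left_mono) auto
  have "((\<lambda>n. hsnorm n (msub (mmul n (?rx n) (?ry n)) (mmul n (x n) (y n)))) \<longlongrightarrow> 0) U"
    by (rule tendsto_zero_dominated[OF hsnorm_nonneg order_trans[OF hsnorm_mmul_diff_le le]])
      (intro tendsto_add_zero tendsto_mult_right_zero tendsto_mult_left_zero rep_ucls(2) assms)
  from ucls_eqI[OF this] show ?thesis
    by (simp add: Qalg_def)
qed

lemma Qalg_mscl:
  assumes "x \<in> bseq"
  shows "t_scl (Qalg U) c (ucls U x) = ucls U (\<lambda>n. mscl c (x n))"
proof -
  have "((\<lambda>n. hsnorm n (msub (mscl c (rep (ucls U x) n)) (mscl c (x n)))) \<longlongrightarrow> 0) U"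
    using tendsto_mult_right_zero[OF rep_ucls(2)[OF assms], of "cmod c"] by (simp add: hsnorm_mscl_diff)
  from ucls_eqI[OF this] show ?thesis
    by (simp add: Qalg_def)
qed

lemma Qalg_mstar:
  assumes "x \<in> bseq"
  shows "t_star (Qalg U) (ucls U x) = ucls U (\<lambda>n. mstar (x n))"
proof -
  have "((\<lambda>n. hsnorm n (msub (mstar (rep (ucls U x) n)) (mstar (x n)))) \<longlongrightarrow> 0) U"
    using rep_ucls(2)[OF assms] by (simp add: hsnorm_mstar_diff)
  from ucls_eqI[OF this] show ?thesis
    by (simp add: Qalg_def)
qed

lemma tm_eval_bseq: "(\<And>j. Y j \<in> bseq) \<Longrightarrow> (\<lambda>n. tm_eval (Mat n) (\<lambda>j. Y j n) t) \<in> bseq"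
  by (induction t) (simp_all add: bseq_closed bseq_mone)

lemma tm_eval_Qalg:
  "(\<And>j. Y j \<in> bseq) \<Longrightarrow> tm_eval (Qalg U) (\<lambda>j. ucls U (Y j)) t = ucls U (\<lambda>n. tm_eval (Mat n) (\<lambda>j. Y j n) t)"
  by (induction t) (simp_all add: Qalg_mone Qalg_madd Qalg_mmul Qalg_mscl Qalg_mstar tm_eval_bseq)

context
  fixes U :: "nat filter"
  assumes U: "free_ultrafilter U"
begin

lemma Qalg_mtr_tendsto:
  assumes "x \<in> bseq"
  shows "((\<lambda>n. mtr n (x n)) \<longlongrightarrow> t_tr (Qalg U) (ucls U x)) U"
proof -
  obtain B where "\<And>n. opnorm n (x n) \<le> B"
    using bseq_bound[OF assms] by blast
  then have bnd: "norm (mtr n (x n)) \<le> B" for n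
    using norm_mtr_le_opnorm order_trans by blast
  obtain l where l: "((\<lambda>n. mtr n (x n)) \<longlongrightarrow> l) U"
    using ultra_tendsto_bounded[OF U, of "\<lambda>n. mtr n (x n)" B] bnd by blast
  let ?r = "rep (ucls U x)"
  have "((\<lambda>n. mtr n (?r n) - mtr n (x n)) \<longlongrightarrow> 0) U"
    by (rule Lim_null_comparison[OF always_eventually rep_ucls(2)[OF assms]])
      (simp add: norm_mtr_diff_le_hsnorm)
  then have "((\<lambda>n. mtr n (?r n)) \<longlongrightarrow> l) U"
    using tendsto_add[OF l] by fastforce
  then have "t_tr (Qalg U) (ucls U x) = l"
    by (simp add: Qalg_def ultra_Lim[OF U])
  then show ?thesis
    using l by simp
qed

lemma opnorm_ultra_tendsto:
  assumes "x \<in> bseq"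
  obtains l where "0 \<le> l" "((\<lambda>n. opnorm n (x n)) \<longlongrightarrow> l) U"
proof -
  obtain B where "\<And>n. opnorm n (x n) \<le> B"
    using bseq_bound[OF assms] by blast
  then obtain l where l: "((\<lambda>n. opnorm n (x n)) \<longlongrightarrow> l) U"
    using ultra_tendsto_bounded[OF U, of "\<lambda>n. opnorm n (x n)" B] by (auto simp: opnorm_nonneg)
  moreover have "0 \<le> l"
    using ultra_tendsto_le[OF U tendsto_const l] by (simp add: opnorm_nonneg)
  ultimately show thesis
    using that by blast
qed

lemma Lim_opnorm_nonneg: "x \<in> bseq \<Longrightarrow> 0 \<le> Lim U (\<lambda>n. opnorm n (x n))"
  by (metis opnorm_ultra_tendsto ultra_Lim[OF U])

lemma bdd_below_Lim_opnorm: "bdd_below ((\<lambda>y. Lim U (\<lambda>n. opnorm n (y n))) ` ucls U x)"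
  by (intro bdd_belowI2[of _ 0]) (simp add: ucls_iff Lim_opnorm_nonneg)

lemma ucls_in_ball_r_Qalg:
  assumes "c \<in> bseq" "\<And>n. opnorm n (c n) \<le> r"
  shows "ucls U c \<in> ball_r (Qalg U) r"
proof -
  obtain l where l: "((\<lambda>n. opnorm n (c n)) \<longlongrightarrow> l) U"
    using opnorm_ultra_tendsto[OF assms(1)] by blast
  have "t_norm (Qalg U) (ucls U c) \<le> Lim U (\<lambda>n. opnorm n (c n))"
    unfolding Qalg_def using bdd_below_Lim_opnorm ucls_self[OF assms(1)] by (auto intro: cINF_lower)
  also have "\<dots> \<le> r"
    using ultra_tendsto_le[OF U l tendsto_const] assms(2) ultra_Lim[OF U l] by simp
  finally show ?thesis
    using assms(1) by (auto simp: ball_r_def Qalg_def)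
qed

text \<open>The norm of the ultraproduct is an infimum over representatives, so a bound on it
  is attained by representatives only up to \<open>\<theta>\<close>.\<close>

lemma ball_r_Qalg_rep:
  assumes C: "C \<in> ball_r (Qalg U) r" and "0 \<le> r" "0 < \<theta>"
  obtains c z where "c \<in> bseq" "ucls U c = C" "\<And>n. c n \<in> ball_r (Mat n) (r + \<theta>)"
    "\<And>n. z n \<in> ball_r (Mat n) r" "\<And>n. opnorm n (msub (c n) (z n)) \<le> \<theta>"
proof -
  obtain x where "x \<in> bseq" and Cx: "C = ucls U x"
    using C by (auto simp: ball_r_def Qalg_def)
  have "C \<noteq> {}"
    using Cx ucls_self[OF \<open>x \<in> bseq\<close>] by blast
  moreover have "(INF y\<in>C. Lim U (\<lambda>n. opnorm n (y n))) < r + \<theta>"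
    using C \<open>0 < \<theta>\<close> by (simp add: ball_r_def Qalg_def)
  ultimately obtain y where "y \<in> C" and y: "Lim U (\<lambda>n. opnorm n (y n)) < r + \<theta>"
    using cINF_less_iff[OF _ bdd_below_Lim_opnorm[of x, folded Cx]] by blast
  then have "y \<in> bseq" and xy: "((\<lambda>n. hsnorm n (msub (x n) (y n))) \<longlongrightarrow> 0) U"
    using Cx by (simp_all add: ucls_iff)
  then obtain l where l: "((\<lambda>n. opnorm n (y n)) \<longlongrightarrow> l) U"
    using opnorm_ultra_tendsto by blast
  then have ev: "eventually (\<lambda>n. opnorm n (y n) < r + \<theta>) U"
    using y ultra_Lim[OF U l] order_tendstoD(2) by metis
  define c where "c n = (if opnorm n (y n) \<le> r + \<theta> then y n else (\<lambda>a b. 0))" for n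
  have c: "c n \<in> ball_r (Mat n) (r + \<theta>)" for n
    using bseq_car[OF \<open>y \<in> bseq\<close>] \<open>0 \<le> r\<close> \<open>0 < \<theta>\<close> by (simp add: c_def ball_r_def car_Mat_closed)
  then have "c \<in> bseq"
    by (intro bseqI[where B="r + \<theta>"]) (auto simp: ball_r_def)
  have "((\<lambda>n. hsnorm n (msub (y n) (c n))) \<longlongrightarrow> 0) U"
    using ev by (rule tendsto_eventually[OF eventually_mono]) (simp add: c_def)
  then have "ucls U c = C"
    using Cx ucls_eqI[OF xy] ucls_eqI[where x=y and y=c] by simp
  moreover have "\<exists>w. w \<in> ball_r (Mat n) r \<and> opnorm n (msub (c n) w) \<le> \<theta>" for n
  proof -
    obtain w where "w \<in> ball_r (Mat n) r" "opnorm n (msub (c n) w) \<le> \<bar>(r + \<theta>) - r\<bar>"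
      using ball_r_Mat_rescale[OF c] \<open>0 \<le> r\<close> \<open>0 < \<theta>\<close> by (metis add_nonneg_pos)
    then show ?thesis
      using \<open>0 < \<theta>\<close> by auto
  qed
  then obtain z where "\<And>n. z n \<in> ball_r (Mat n) r \<and> opnorm n (msub (c n) (z n)) \<le> \<theta>"
    by metis
  ultimately show thesis
    using that \<open>c \<in> bseq\<close> c by blast
qed

lemma env_ball_bseq:
  assumes "\<And>j. Y j \<in> bseq" "\<And>j n. opnorm n (Y j n) \<le> B" "B \<le> R"
  shows "env_ball n R (\<lambda>j. Y j n)"
proof -
  have "opnorm n (Y j n) \<le> R" for j
    using assms(2)[where j=j and n=n] assms(3) by linarith
  then show ?thesis
    using bseq_car[OF assms(1)] by (simp add: env_ball_def ball_r_Mat)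
qed

lemma fm_eval_Qalg_upd_tendsto:
  assumes IH: "\<And>Y B. (\<And>j. Y j \<in> bseq) \<Longrightarrow> (\<And>j n. opnorm n (Y j n) \<le> B) \<Longrightarrow>
      ((\<lambda>n. fm_eval (Mat n) (\<lambda>j. Y j n) \<phi>) \<longlongrightarrow> fm_eval (Qalg U) (\<lambda>j. ucls U (Y j)) \<phi>) U"
    and Y: "\<And>j. Y j \<in> bseq" "\<And>j n. opnorm n (Y j n) \<le> B" and c: "c \<in> bseq"
  shows "((\<lambda>n. fm_eval (Mat n) ((\<lambda>j. Y j n)(k := c n)) \<phi>)
           \<longlongrightarrow> fm_eval (Qalg U) ((\<lambda>j. ucls U (Y j))(k := ucls U c)) \<phi>) U"
proof -
  obtain Bc where "\<And>n. opnorm n (c n) \<le> Bc"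
    using bseq_bound[OF c] by blast
  then have bnd: "\<And>j n. opnorm n ((Y(k := c)) j n) \<le> max B Bc"
    using Y(2) by (simp add: le_max_iff_disj)
  have "\<And>j. (Y(k := c)) j \<in> bseq"
    using Y(1) c by simp
  then have "((\<lambda>n. fm_eval (Mat n) (\<lambda>j. (Y(k := c)) j n) \<phi>)
      \<longlongrightarrow> fm_eval (Qalg U) (\<lambda>j. ucls U ((Y(k := c)) j)) \<phi>) U"
    using bnd by (rule IH)
  moreover have "(\<lambda>j. (Y(k := c)) j n) = (\<lambda>j. Y j n)(k := c n)" for n
    by auto
  moreover have "(\<lambda>j. ucls U ((Y(k := c)) j)) = (\<lambda>j. ucls U (Y j))(k := ucls U c)"
    by (auto simp: fun_eq_iff)
  ultimately show ?thesis
    by simp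
qed

lemma fm_eval_Qalg_quantifier_tendsto:
  assumes "wf \<phi>" "0 < r" and Y: "\<And>j. Y j \<in> bseq" "\<And>j n. opnorm n (Y j n) \<le> B"
    and IH: "\<And>Y B. (\<And>j. Y j \<in> bseq) \<Longrightarrow> (\<And>j n. opnorm n (Y j n) \<le> B) \<Longrightarrow>
      ((\<lambda>n. fm_eval (Mat n) (\<lambda>j. Y j n) \<phi>) \<longlongrightarrow> fm_eval (Qalg U) (\<lambda>j. ucls U (Y j)) \<phi>) U"
  shows "((\<lambda>n. fm_eval (Mat n) (\<lambda>j. Y j n) (SupF r k \<phi>))
           \<longlongrightarrow> fm_eval (Qalg U) (\<lambda>j. ucls U (Y j)) (SupF r k \<phi>)) U"
    and "((\<lambda>n. fm_eval (Mat n) (\<lambda>j. Y j n) (InfF r k \<phi>))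
           \<longlongrightarrow> fm_eval (Qalg U) (\<lambda>j. ucls U (Y j)) (InfF r k \<phi>)) U"
proof -
  define F where "F n z = fm_eval (Mat n) ((\<lambda>j. Y j n)(k := z)) \<phi>" for n z
  define G where "G C = fm_eval (Qalg U) ((\<lambda>j. ucls U (Y j))(k := C)) \<phi>" for C
  define R where "R = max B r + 1"
  have "B \<le> R"
    by (simp add: R_def)
  then have env: "env_ball n R ((\<lambda>j. Y j n)(k := z))" if "z \<in> ball_r (Mat n) s" "s \<le> R" for n z s
    using env_ball_upd[OF env_ball_bseq[where Y=Y and B=B and R=R, OF Y] that(1) order_refl that(2)]
    by blast
  obtain M where M: "\<And>n \<rho>. env_ball n R \<rho> \<Longrightarrow> \<bar>fm_eval (Mat n) \<rho> \<phi>\<bar> \<le> M"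
    using fm_eval_Mat_bounded[OF \<open>wf \<phi>\<close>] by blast
  have upd: "((\<lambda>n. F n (c n)) \<longlongrightarrow> G (ucls U c)) U" if "c \<in> bseq" for c
    unfolding F_def G_def by (rule fm_eval_Qalg_upd_tendsto[where Y=Y and B=B, OF IH Y that])
  have ne: "ball_r (Mat n) r \<noteq> {}" for n
    using zero_in_ball_r_Mat[OF less_imp_le[OF \<open>0 < r\<close>]] by blast
  have "(\<lambda>n. (\<lambda>a b. 0)) \<in> bseq"
    by (rule bseqI[of _ 0]) (simp_all add: car_Mat_closed)
  then have neQ: "ball_r (Qalg U) r \<noteq> {}"
    using ucls_in_ball_r_Qalg[of _ r] \<open>0 < r\<close> by force
  have boundF: "\<bar>F n z\<bar> \<le> M" if "z \<in> ball_r (Mat n) r" for n z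
    unfolding F_def using M env[OF that] R_def by simp
  have boundG: "\<bar>G C\<bar> \<le> M" if C: "C \<in> ball_r (Qalg U) r" for C
  proof -
    obtain c z where c: "c \<in> bseq" "ucls U c = C" "\<And>n. c n \<in> ball_r (Mat n) (r + 1)"
      and "\<And>n. z n \<in> ball_r (Mat n) r" "\<And>n. opnorm n (msub (c n) (z n)) \<le> 1"
      using ball_r_Qalg_rep[OF C less_imp_le[OF \<open>0 < r\<close>] zero_less_one] by blast
    have "r + 1 \<le> R"
      by (simp add: R_def)
    then have "eventually (\<lambda>n. \<bar>F n (c n)\<bar> \<le> M) U"
      unfolding F_def using M env[OF c(3)] by (intro always_eventually) blast
    then show ?thesis
      using ultra_tendsto_le[OF U tendsto_rabs[OF upd[OF c(1)]] tendsto_const] c(2) by simp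
  qed
  have lim: "\<exists>C\<in>ball_r (Qalg U) r. ((\<lambda>n. F n (z n)) \<longlongrightarrow> G C) U"
    if "\<And>n. z n \<in> ball_r (Mat n) r" for z
  proof -
    have "z \<in> bseq" "\<And>n. opnorm n (z n) \<le> r"
      using that by (auto intro: bseqI simp: ball_r_Mat)
    then show ?thesis
      using upd ucls_in_ball_r_Qalg by blast
  qed
  have approx: "\<exists>z v. (\<forall>n. z n \<in> ball_r (Mat n) r) \<and> (v \<longlongrightarrow> G C) U \<and> (\<forall>n. \<bar>v n - F n (z n)\<bar> \<le> e)"
    if C: "C \<in> ball_r (Qalg U) r" and "0 < e" for C e
  proof -
    obtain \<delta> where "0 < \<delta>" and \<delta>: "\<And>n \<rho> \<rho>'. env_ball n R \<rho> \<Longrightarrow> env_ball n R \<rho>' \<Longrightarrow> env_close n \<delta> \<rho> \<rho>' \<Longrightarrow>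
        \<bar>fm_eval (Mat n) \<rho> \<phi> - fm_eval (Mat n) \<rho>' \<phi>\<bar> \<le> e"
      using fm_eval_Mat_uniformly_continuous[OF \<open>wf \<phi>\<close> \<open>0 < e\<close>, of R] by blast
    have "0 < min \<delta> 1"
      using \<open>0 < \<delta>\<close> by simp
    obtain c z where c: "c \<in> bseq" "ucls U c = C" "\<And>n. c n \<in> ball_r (Mat n) (r + min \<delta> 1)"
      and z: "\<And>n. z n \<in> ball_r (Mat n) r" "\<And>n. opnorm n (msub (c n) (z n)) \<le> min \<delta> 1"
      using ball_r_Qalg_rep[OF C less_imp_le[OF \<open>0 < r\<close>] \<open>0 < min \<delta> 1\<close>] by blast
    have R: "r + min \<delta> 1 \<le> R" "r \<le> R"
      by (auto simp: R_def)
    have "env_close n \<delta> ((\<lambda>j. Y j n)(k := c n)) ((\<lambda>j. Y j n)(k := z n))" for n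
      using env_close_upd[OF env_close_refl[OF less_imp_le[OF \<open>0 < \<delta>\<close>]], where z="c n" and w="z n"]
        z(2)[of n] by (simp add: min_le_iff_disj)
    then have "\<bar>F n (c n) - F n (z n)\<bar> \<le> e" for n
      unfolding F_def using \<delta>[OF env[OF c(3) R(1)] env[OF z(1) R(2)]] by blast
    then show ?thesis
      using z(1) upd[OF c(1)] c(2) by blast
  qed
  note los = ultra_tendsto_SUP_INF[OF U ne neQ boundF boundG lim approx]
  show "((\<lambda>n. fm_eval (Mat n) (\<lambda>j. Y j n) (SupF r k \<phi>))
           \<longlongrightarrow> fm_eval (Qalg U) (\<lambda>j. ucls U (Y j)) (SupF r k \<phi>)) U"
    using los(1) by (simp add: F_def G_def)
  show "((\<lambda>n. fm_eval (Mat n) (\<lambda>j. Y j n) (InfF r k \<phi>))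
           \<longlongrightarrow> fm_eval (Qalg U) (\<lambda>j. ucls U (Y j)) (InfF r k \<phi>)) U"
    using los(2) by (simp add: F_def G_def)
qed

theorem fm_eval_Qalg_tendsto:
  assumes "wf \<phi>" "\<And>j. Y j \<in> bseq" "\<And>j n. opnorm n (Y j n) \<le> B"
  shows "((\<lambda>n. fm_eval (Mat n) (\<lambda>j. Y j n) \<phi>) \<longlongrightarrow> fm_eval (Qalg U) (\<lambda>j. ucls U (Y j)) \<phi>) U"
  using assms
proof (induction \<phi> arbitrary: Y B)
  case (ReTr t)
  show ?case
    using tendsto_Re[OF Qalg_mtr_tendsto[OF tm_eval_bseq[OF ReTr.prems(2)]]]
    by (simp add: tm_eval_Qalg[OF ReTr.prems(2)])
next
  case (ImTr t)
  show ?case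
    using tendsto_Im[OF Qalg_mtr_tendsto[OF tm_eval_bseq[OF ImTr.prems(2)]]]
    by (simp add: tm_eval_Qalg[OF ImTr.prems(2)])
next
  case (Conn f ps)
  have "((\<lambda>n. fm_args (fm_eval (Mat n) (\<lambda>j. Y j n)) ps)
      \<longlongrightarrow> fm_args (fm_eval (Qalg U) (\<lambda>j. ucls U (Y j))) ps) U"
  proof (rule tendsto_fun_coordinatewise)
    fix i
    show "((\<lambda>n. fm_args (fm_eval (Mat n) (\<lambda>j. Y j n)) ps i)
        \<longlongrightarrow> fm_args (fm_eval (Qalg U) (\<lambda>j. ucls U (Y j))) ps i) U"
    proof (cases "i < length ps")
      case True
      then have p: "ps ! i \<in> set ps"
        by simp
      show ?thesis
        using Conn.IH[OF p wf_ConnD(2)[OF Conn.prems(1) p] Conn.prems(2,3)] True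
        by (simp add: fm_args_def)
    qed (simp add: fm_args_def)
  qed
  moreover have "isCont f (fm_args (fm_eval (Qalg U) (\<lambda>j. ucls U (Y j))) ps)"
    using wf_ConnD(1)[OF Conn.prems(1)] by (simp add: continuous_on_eq_continuous_at)
  ultimately show ?case
    unfolding fm_eval_Conn by (rule isCont_tendsto_compose[rotated])
next
  case (SupF r k \<phi>)
  then have "wf \<phi>" "0 < r"
    by auto
  show ?case
    using fm_eval_Qalg_quantifier_tendsto(1)[OF \<open>wf \<phi>\<close> \<open>0 < r\<close> SupF.prems(2,3) SupF.IH[OF \<open>wf \<phi>\<close>]] .
next
  case (InfF r k \<phi>)
  then have "wf \<phi>" "0 < r"
    by auto
  show ?case
    using fm_eval_Qalg_quantifier_tendsto(2)[OF \<open>wf \<phi>\<close> \<open>0 < r\<close> InfF.prems(2,3) InfF.IH[OF \<open>wf \<phi>\<close>]] .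
qed

end

section \<open>Microstates\<close>

lemma Gamma_env_ball:
  assumes "Y \<in> Gamma d n r V" "0 \<le> r"
  shows "env_ball n r Y"
  unfolding env_ball_def
proof
  fix j
  show "Y j \<in> ball_r (Mat n) r"
    using assms zero_in_ball_r_Mat[OF assms(2)] by (cases "j < d") (auto simp: Gamma_def)
qed

lemma zero_in_Gamma: "0 \<le> r \<Longrightarrow> (\<lambda>j a b. 0) \<in> Gamma d n r UNIV"
  unfolding Gamma_def using zero_in_ball_r_Mat by auto

lemma tp_eq_fm_eval: "wf \<phi> \<Longrightarrow> fv \<phi> \<subseteq> {..<d} \<Longrightarrow> tp A d Y \<phi> = fm_eval A Y \<phi>"
  by (simp add: tp_def)

text \<open>An empty microstate space has logarithmic volume \<open>-\<infinity>\<close>.\<close>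

lemma chi_full_microstates:
  assumes U: "free_ultrafilter U" and "-\<infinity> < chi_full U d {\<mu>}"
  shows "\<exists>r>0. \<forall>V. open V \<longrightarrow> \<mu> \<in> V \<longrightarrow> eventually (\<lambda>n. Gamma d n r V \<noteq> {}) U"
proof -
  obtain r where "0 < r" and r: "-\<infinity> < chi_full_r U d r {\<mu>}"
    using assms(2) unfolding chi_full_def by (auto simp: less_SUP_iff)
  have "eventually (\<lambda>n. Gamma d n r V \<noteq> {}) U" if "open V" "\<mu> \<in> V" for V
  proof (rule ccontr)
    assume "\<not> eventually (\<lambda>n. Gamma d n r V \<noteq> {}) U"
    then have "eventually (\<lambda>n. Gamma d n r V = {}) U"
      using ultra_cases[OF U, of "\<lambda>n. Gamma d n r V \<noteq> {}"] by simp
    then have "eventually (\<lambda>n. logvol d n (Gamma d n r V) = -\<infinity>) U"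
      by eventually_elim (simp add: logvol_def vol_def)
    then have "Lim U (\<lambda>n. logvol d n (Gamma d n r V)) = -\<infinity>"
      by (intro ultra_Lim[OF U] tendsto_eventually)
    moreover have "chi_full_r U d r {\<mu>} \<le> Lim U (\<lambda>n. logvol d n (Gamma d n r V))"
      unfolding chi_full_r_def by (rule INF_lower) (use that in auto)
    ultimately show False
      using r by simp
  qed
  with \<open>0 < r\<close> show ?thesis
    by blast
qed

lemma microstate_sequence:
  assumes "F \<le> sequentially" "0 \<le> r"
    and micro: "\<And>V. open V \<Longrightarrow> \<mu> \<in> V \<Longrightarrow> eventually (\<lambda>n. Gamma d n r V \<noteq> {}) F"
  shows "\<exists>Z. (\<forall>n. Z n \<in> Gamma d n r UNIV) \<and>
    (\<forall>\<psi>. ((\<lambda>n. tp (Mat n) d (Z n) (fm_of_rfm \<psi>)) \<longlongrightarrow> \<mu> (fm_of_rfm \<psi>)) F)"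
proof -
  define e where "e i = fm_of_rfm (from_nat i)" for i
  have ev: "eventually (\<lambda>n. \<exists>Y\<in>Gamma d n r UNIV. \<forall>i<k. \<bar>tp (Mat n) d Y (e i) - \<mu> (e i)\<bar> < 1 / Suc k) F"
    for k
  proof -
    define V where "V = {\<tau>. \<forall>i\<in>{..<k}. \<tau> (e i) \<in> ball (\<mu> (e i)) (1 / Suc k)}"
    have "open V"
      unfolding V_def by (rule product_topology_basis') auto
    moreover have "\<mu> \<in> V"
      by (simp add: V_def)
    ultimately have "eventually (\<lambda>n. Gamma d n r V \<noteq> {}) F"
      by (rule micro)
    then show ?thesis
    proof eventually_elim
      case (elim n)
      then obtain Y where "Y \<in> Gamma d n r V"
        by blast
      then show ?case
        by (auto simp: Gamma_def V_def dist_real_def abs_minus_commute)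
    qed
  qed
  have ne: "Gamma d n r UNIV \<noteq> {}" for n
    using zero_in_Gamma[OF \<open>0 \<le> r\<close>] by blast
  obtain Z where "\<forall>n. Z n \<in> Gamma d n r UNIV"
    and Z: "\<And>i. ((\<lambda>n. tp (Mat n) d (Z n) (e i)) \<longlongrightarrow> \<mu> (e i)) F"
    using diagonal_choice[OF assms(1) ne ev] by blast
  moreover have "((\<lambda>n. tp (Mat n) d (Z n) (fm_of_rfm \<psi>)) \<longlongrightarrow> \<mu> (fm_of_rfm \<psi>)) F" for \<psi>
    using Z[of "to_nat \<psi>"] by (simp add: e_def)
  ultimately show ?thesis
    by blast
qed

lemma type_value_dist_le:
  assumes micro: "\<And>V. open V \<Longrightarrow> \<mu> \<in> V \<Longrightarrow> \<exists>n. Gamma d n r V \<noteq> {}" and "0 \<le> r"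
    and "wf \<phi>" "wf \<psi>" "fv \<phi> \<subseteq> {..<d}" "fv \<psi> \<subseteq> {..<d}" and near: "fm_near r e \<phi> \<psi>"
  shows "\<bar>\<mu> \<phi> - \<mu> \<psi>\<bar> \<le> e"
proof (rule field_le_epsilon)
  fix \<epsilon> :: real assume "0 < \<epsilon>"
  define W where "W = {\<tau>. \<forall>\<xi>\<in>{\<phi>, \<psi>}. \<tau> (id \<xi>) \<in> ball (\<mu> \<xi>) (\<epsilon> / 2)}"
  have "open W"
    unfolding W_def by (rule product_topology_basis') auto
  moreover have "\<mu> \<in> W"
    using \<open>0 < \<epsilon>\<close> by (simp add: W_def)
  ultimately obtain n Y where Y: "Y \<in> Gamma d n r W"
    using micro by blast
  then have "\<bar>\<mu> \<phi> - fm_eval (Mat n) Y \<phi>\<bar> < \<epsilon> / 2" "\<bar>\<mu> \<psi> - fm_eval (Mat n) Y \<psi>\<bar> < \<epsilon> / 2"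
    using assms(3-6) by (auto simp: Gamma_def W_def tp_eq_fm_eval dist_real_def)
  moreover have "\<bar>fm_eval (Mat n) Y \<phi> - fm_eval (Mat n) Y \<psi>\<bar> \<le> e"
    using near Gamma_env_ball[OF Y \<open>0 \<le> r\<close>] by (simp add: fm_near_def)
  ultimately show "\<bar>\<mu> \<phi> - \<mu> \<psi>\<bar> \<le> e + \<epsilon>"
    by linarith
qed

lemma tp_tendsto_of_rat_formulas:
  assumes micro: "\<And>V. open V \<Longrightarrow> \<mu> \<in> V \<Longrightarrow> \<exists>n. Gamma d n r V \<noteq> {}" and "0 \<le> r"
    and Z: "\<And>n. Z n \<in> Gamma d n r UNIV"
    and rat: "\<And>\<psi>. ((\<lambda>n. tp (Mat n) d (Z n) (fm_of_rfm \<psi>)) \<longlongrightarrow> \<mu> (fm_of_rfm \<psi>)) F"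
    and "wf \<phi>" "fv \<phi> \<subseteq> {..<d}"
  shows "((\<lambda>n. tp (Mat n) d (Z n) \<phi>) \<longlongrightarrow> \<mu> \<phi>) F"
proof (rule tendstoI)
  fix \<epsilon> :: real assume "0 < \<epsilon>"
  then obtain \<psi> where \<psi>: "wf (fm_of_rfm \<psi>)" "fv (fm_of_rfm \<psi>) \<subseteq> fv \<phi>" "fm_near r (\<epsilon> / 3) \<phi> (fm_of_rfm \<psi>)"
    using fm_rat_approx[OF \<open>wf \<phi>\<close>, of "\<epsilon> / 3" r] by auto
  then have fv\<psi>: "fv (fm_of_rfm \<psi>) \<subseteq> {..<d}"
    using assms(6) by blast
  have \<mu>\<psi>: "\<bar>\<mu> \<phi> - \<mu> (fm_of_rfm \<psi>)\<bar> \<le> \<epsilon> / 3"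
    by (rule type_value_dist_le[OF micro \<open>0 \<le> r\<close> \<open>wf \<phi>\<close> \<psi>(1) assms(6) fv\<psi> \<psi>(3)])
  have "eventually (\<lambda>n. dist (tp (Mat n) d (Z n) (fm_of_rfm \<psi>)) (\<mu> (fm_of_rfm \<psi>)) < \<epsilon> / 3) F"
    by (rule tendstoD[OF rat]) (use \<open>0 < \<epsilon>\<close> in simp)
  then show "eventually (\<lambda>n. dist (tp (Mat n) d (Z n) \<phi>) (\<mu> \<phi>) < \<epsilon>) F"
  proof (rule eventually_mono)
    fix n
    assume "dist (tp (Mat n) d (Z n) (fm_of_rfm \<psi>)) (\<mu> (fm_of_rfm \<psi>)) < \<epsilon> / 3"
    moreover have "dist (\<mu> (fm_of_rfm \<psi>)) (\<mu> \<phi>) \<le> \<epsilon> / 3"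
      using \<mu>\<psi> by (simp add: dist_real_def abs_minus_commute)
    moreover have "dist (tp (Mat n) d (Z n) \<phi>) (tp (Mat n) d (Z n) (fm_of_rfm \<psi>)) \<le> \<epsilon> / 3"
      using \<psi> Gamma_env_ball[OF Z \<open>0 \<le> r\<close>] assms(5,6) fv\<psi>
      by (simp add: fm_near_def tp_eq_fm_eval dist_real_def)
    ultimately show "dist (tp (Mat n) d (Z n) \<phi>) (\<mu> \<phi>) < \<epsilon>"
      using dist_triangle[of "tp (Mat n) d (Z n) \<phi>" "\<mu> \<phi>" "tp (Mat n) d (Z n) (fm_of_rfm \<psi>)"]
        dist_triangle[of "tp (Mat n) d (Z n) (fm_of_rfm \<psi>)" "\<mu> \<phi>" "\<mu> (fm_of_rfm \<psi>)"]
      by linarith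
  qed
qed

lemma Gamma_bseq:
  assumes "\<And>n. Z n \<in> Gamma d n r V" "0 \<le> r"
  shows "(\<lambda>n. Z n j) \<in> bseq" and "opnorm n (Z n j) \<le> r"
proof -
  have "Z n j \<in> t_car (Mat n)" "opnorm n (Z n j) \<le> r" for n
    using Gamma_env_ball[OF assms(1,2)] by (auto simp: env_ball_def ball_r_Mat)
  then show "(\<lambda>n. Z n j) \<in> bseq" "opnorm n (Z n j) \<le> r"
    by (auto intro: bseqI)
qed

lemma tp_Qalg_microstate_limit:
  assumes U: "free_ultrafilter U" and "0 \<le> r"
    and micro: "\<And>V. open V \<Longrightarrow> \<mu> \<in> V \<Longrightarrow> eventually (\<lambda>n. Gamma d n r V \<noteq> {}) U"
    and Z: "\<And>n. Z n \<in> Gamma d n r UNIV"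
    and rat: "\<And>\<psi>. ((\<lambda>n. tp (Mat n) d (Z n) (fm_of_rfm \<psi>)) \<longlongrightarrow> \<mu> (fm_of_rfm \<psi>)) U"
    and \<phi>: "wf \<phi>" "fv \<phi> \<subseteq> {..<d}"
  shows "tp (Qalg U) d (\<lambda>j. ucls U (\<lambda>n. Z n j)) \<phi> = \<mu> \<phi>"
proof -
  have "\<exists>n. Gamma d n r V \<noteq> {}" if "open V" "\<mu> \<in> V" for V
    using eventually_happens'[OF ultra_nontrivial[OF U] micro[OF that]] .
  then have "((\<lambda>n. tp (Mat n) d (Z n) \<phi>) \<longlongrightarrow> \<mu> \<phi>) U"
    using tp_tendsto_of_rat_formulas[OF _ \<open>0 \<le> r\<close> Z rat \<phi>] by blast
  moreover have "((\<lambda>n. tp (Mat n) d (Z n) \<phi>) \<longlongrightarrow> tp (Qalg U) d (\<lambda>j. ucls U (\<lambda>n. Z n j)) \<phi>) U"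
    using fm_eval_Qalg_tendsto[OF U \<phi>(1) Gamma_bseq[OF Z \<open>0 \<le> r\<close>]] \<phi> by (simp add: tp_eq_fm_eval)
  ultimately show ?thesis
    by (rule tendsto_unique[OF ultra_nontrivial[OF U], symmetric])
qed

theorem lemma3:
  fixes U :: "nat filter" and d :: nat and M :: "'a tralg" and X :: "nat \<Rightarrow> 'a"
  assumes "free_ultrafilter U"
    and "tracial_W M"
    and "\<forall>j<d. X j \<in> t_car M"
    and "chi_full U d {tp M d X} > -\<infinity>"
  shows "\<exists>Y. (\<forall>j<d. Y j \<in> t_car (Qalg U)) \<and> tp (Qalg U) d Y = tp M d X"
proof -
  define \<mu> where "\<mu> = tp M d X"
  have "\<exists>r>0. \<forall>V. open V \<longrightarrow> \<mu> \<in> V \<longrightarrow> eventually (\<lambda>n. Gamma d n r V \<noteq> {}) U"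
    unfolding \<mu>_def using assms(4) by (rule chi_full_microstates[OF assms(1)])
  then obtain r where "0 \<le> r"
    and micro: "\<And>V. open V \<Longrightarrow> \<mu> \<in> V \<Longrightarrow> eventually (\<lambda>n. Gamma d n r V \<noteq> {}) U"
    by (blast intro: less_imp_le)
  obtain Z where Z: "\<And>n. Z n \<in> Gamma d n r UNIV"
    and rat: "\<And>\<psi>. ((\<lambda>n. tp (Mat n) d (Z n) (fm_of_rfm \<psi>)) \<longlongrightarrow> \<mu> (fm_of_rfm \<psi>)) U"
    using microstate_sequence[OF ultra_le_sequentially[OF assms(1)] \<open>0 \<le> r\<close> micro] by blast
  define Y where "Y = (\<lambda>j. ucls U (\<lambda>n. Z n j))"
  have "tp (Qalg U) d Y \<phi> = \<mu> \<phi>" for \<phi>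
  proof (cases "wf \<phi> \<and> fv \<phi> \<subseteq> {..<d}")
    case True
    then show ?thesis
      using tp_Qalg_microstate_limit[OF assms(1) \<open>0 \<le> r\<close> micro Z rat] by (simp add: Y_def)
  qed (auto simp: tp_def \<mu>_def)
  then have "tp (Qalg U) d Y = tp M d X"
    unfolding \<mu>_def by (rule ext)
  moreover have "\<forall>j<d. Y j \<in> t_car (Qalg U)"
    using Gamma_bseq(1)[OF Z \<open>0 \<le> r\<close>] by (simp add: Y_def Qalg_car)
  ultimately show ?thesis
    by blast
qed

end
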